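(* Let $(\mathfrak{g},V,\Theta)$ be a Lie-Leibniz triple, let $\mathfrak{h}=\mathrm{Im}(\Theta)$, and let $(T_{\leq-1},\llbracket\,.\,,.\,\rrbracket)$ be its associated negatively graded Lie algebra. Then there exists a unique family of $\mathfrak{h}$-equivariant linear maps $\partial=(\partial_{-i}:T_{-i-1}\to T_{-i})_{i\geq1}$ (a degree $+1$ map, extended as a graded derivation of $\Lambda^\bullet(T_{\leq-1})$) such that $\partial\llbracket u,v\rrbracket=2\{u,v\}$, $\partial\llbracket u,x\rrbracket=\Theta(u)\cdot x-\llbracket u,\partial(x)\rrbracket$, $\partial\llbracket x,y\rrbracket=\llbracket\partial(x),y\rrbracket+(-1)^{|x|}\llbracket x,\partial(y)\rrbracket$ for all $u,v\in T_{-1}$ and $x,y\in T_{\leq-2}$. Moreover $\partial_{-i}\circ\partial_{-i-1}=0$ for every $i\geq1$.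
   Context: A (left) Leibniz algebra is a vector space $V$ with bilinear $\circ$ satisfying $x\circ(y\circ z)=(x\circ y)\circ z+y\circ(x\circ z)$; $\{x,y\}=\frac12(x\circ y+y\circ x)$. A Lie-Leibniz triple $(\mathfrak{g},V,\Theta)$ consists of a Lie algebra $\mathfrak{g}$, a $\mathfrak{g}$-module $V$ (action $a\cdot x$) with a Leibniz product $\circ$, and a linear map $\Theta:V\to\mathfrak{g}$ with $x\circ y=\Theta(x)\cdot y$ and $\Theta(x\circ y)=[\Theta(x),\Theta(y)]$. Associated graded Lie algebra: let $K$ be the largest $\mathfrak{g}$-submodule of $S^2(V)$ contained in the kernel of $S^2(V)\to V$, $x\odot y\mapsto\{x,y\}$. Let $F=\bigoplus_{i\geq1}F_{-i}$ be the free graded Lie algebra generated by $V[1]$ (a copy of $V$ in degree $-1$); identify $F_{-2}$ with $S^2(V)$ via $[x,y]\leftrightarrow x\odot y$, and let $\mathfrak g$ act on $F$ by the unique derivations extending its action on $V$. Put $K_{-2}=K$ and $K_{-i}=\sum_{j=1}^{i-2}[F_{-j},K_{-i+j}]$ for $i\geq3$; $K_\bullet$ is a graded Lie ideal and $\mathfrak{g}$-submodule of $F$. Define $T_{-1}=V[1]$, $T_{-i}=F_{-i}/K_{-i}$ ($i\ge2$), $T_{\leq-1}=F/K_\bullet$ with the induced bracket $\llbracket\,.\,,.\,\rrbracket$ and $\mathfrak{g}$-action. $\mathfrak{h}$-equivariance of $\partial_{-i}$ means $\partial_{-i}(a\cdot x)=a\cdot\partial_{-i}(x)$ for $a\in\mathfrak{h}$.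 Here $T_{\leq -2}=\bigoplus_{i\ge2}T_{-i}$. *)

theory Defs
  imports Complex_Main "HOL-Library.Function_Algebras"
begin

definition lie_algebra :: "('k::field \<Rightarrow> 'g::ab_group_add \<Rightarrow> 'g) \<Rightarrow> ('g \<Rightarrow> 'g \<Rightarrow> 'g) \<Rightarrow> bool" where
  "lie_algebra sG brg \<longleftrightarrow> Vector_Spaces.vector_space sG
     \<and> (\<forall>a. Vector_Spaces.linear sG sG (brg a)) \<and> (\<forall>b. Vector_Spaces.linear sG sG (\<lambda>a. brg a b))
     \<and> (\<forall>a. brg a a = 0)
     \<and> (\<forall>a b c. brg a (brg b c) = brg (brg a b) c + brg b (brg a c))"

definition lie_module :: "('k::field \<Rightarrow> 'g::ab_group_add \<Rightarrow> 'g) \<Rightarrow> ('g \<Rightarrow> 'g \<Rightarrow> 'g)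
     \<Rightarrow> ('k \<Rightarrow> 'v::ab_group_add \<Rightarrow> 'v) \<Rightarrow> ('g \<Rightarrow> 'v \<Rightarrow> 'v) \<Rightarrow> bool" where
  "lie_module sG brg sV act \<longleftrightarrow> Vector_Spaces.vector_space sV
     \<and> (\<forall>a. Vector_Spaces.linear sV sV (act a)) \<and> (\<forall>x. Vector_Spaces.linear sG sV (\<lambda>a. act a x))
     \<and> (\<forall>a b x. act (brg a b) x = act a (act b x) - act b (act a x))"

definition leibniz :: "('k::field \<Rightarrow> 'v::ab_group_add \<Rightarrow> 'v) \<Rightarrow> ('v \<Rightarrow> 'v \<Rightarrow> 'v) \<Rightarrow> bool" where
  "leibniz sV circ \<longleftrightarrow> (\<forall>x. Vector_Spaces.linear sV sV (circ x)) \<and> (\<forall>y. Vector_Spaces.linear sV sV (\<lambda>x. circ x y))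
     \<and> (\<forall>x y z. circ x (circ y z) = circ (circ x y) z + circ y (circ x z))"

definition lie_leibniz_triple :: "('k::field \<Rightarrow> 'g::ab_group_add \<Rightarrow> 'g) \<Rightarrow> ('g \<Rightarrow> 'g \<Rightarrow> 'g)
     \<Rightarrow> ('k \<Rightarrow> 'v::ab_group_add \<Rightarrow> 'v) \<Rightarrow> ('g \<Rightarrow> 'v \<Rightarrow> 'v) \<Rightarrow> ('v \<Rightarrow> 'v \<Rightarrow> 'v) \<Rightarrow> ('v \<Rightarrow> 'g) \<Rightarrow> bool" where
  "lie_leibniz_triple sG brg sV act circ Theta \<longleftrightarrow>
     lie_algebra sG brg \<and> lie_module sG brg sV act \<and> leibniz sV circ \<and> Vector_Spaces.linear sV sG Theta
     \<and> (\<forall>x y. circ x y = act (Theta x) y)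
     \<and> (\<forall>x y. Theta (circ x y) = brg (Theta x) (Theta y))"

definition anticomm :: "('k::field \<Rightarrow> 'v::ab_group_add \<Rightarrow> 'v) \<Rightarrow> ('v \<Rightarrow> 'v \<Rightarrow> 'v) \<Rightarrow> 'v \<Rightarrow> 'v \<Rightarrow> 'v" where
  "anticomm sV circ x y = sV (1/2) (circ x y + circ y x)"

text \<open>Binary trees with leaves in V; a tree with n leaves has degree -n.
  The free graded Lie algebra F is realised as finitely supported formal
  linear combinations of trees (W) modulo multilinearity in the leaves,
  graded antisymmetry and graded Jacobi (the ideal R0).\<close>

datatype 'v ltree = Leaf 'v | Node "'v ltree" "'v ltree"

fun nleaves :: "'v ltree \<Rightarrow> nat" where
  "nleaves (Leaf x) = 1"
| "nleaves (Node s t) = nleaves s + nleaves t"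

definition supp :: "('v ltree \<Rightarrow> 'k::zero) \<Rightarrow> 'v ltree set" where
  "supp f = {t. f t \<noteq> 0}"

definition Wc :: "('v ltree \<Rightarrow> 'k::field) set" where
  "Wc = {f. finite (supp f)}"

definition Wdeg :: "nat \<Rightarrow> ('v ltree \<Rightarrow> 'k::field) set" where
  "Wdeg i = {f. finite (supp f) \<and> (\<forall>t. f t \<noteq> 0 \<longrightarrow> nleaves t = i)}"

definition ind :: "'v ltree \<Rightarrow> 'v ltree \<Rightarrow> 'k::field" where
  "ind t = (\<lambda>r. if r = t then 1 else 0)"

definition sW :: "'k::field \<Rightarrow> ('v ltree \<Rightarrow> 'k) \<Rightarrow> ('v ltree \<Rightarrow> 'k)" where
  "sW c f = (\<lambda>t. c * f t)"

definition br :: "('v ltree \<Rightarrow> 'k::field) \<Rightarrow> ('v ltree \<Rightarrow> 'k) \<Rightarrow> ('v ltree \<Rightarrow> 'k)" where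
  "br f g = (\<lambda>r. case r of Leaf _ \<Rightarrow> 0 | Node s t \<Rightarrow> f s * g t)"

inductive_set R0 :: "('k::field \<Rightarrow> 'v::ab_group_add \<Rightarrow> 'v) \<Rightarrow> ('v ltree \<Rightarrow> 'k) set"
  for sV :: "'k \<Rightarrow> 'v \<Rightarrow> 'v" where
  lin_add: "ind (Leaf (x + y)) - ind (Leaf x) - ind (Leaf y) \<in> R0 sV"
| lin_scale: "ind (Leaf (sV c x)) - sW c (ind (Leaf x)) \<in> R0 sV"
| antisym: "br (ind s) (ind t) + sW ((-1) ^ (nleaves s * nleaves t)) (br (ind t) (ind s)) \<in> R0 sV"
| jacobi: "br (ind x) (br (ind y) (ind z)) - br (br (ind x) (ind y)) (ind z)
            - sW ((-1) ^ (nleaves x * nleaves y)) (br (ind y) (br (ind x) (ind z))) \<in> R0 sV"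
| zero: "0 \<in> R0 sV"
| add: "a \<in> R0 sV \<Longrightarrow> b \<in> R0 sV \<Longrightarrow> a + b \<in> R0 sV"
| scale: "a \<in> R0 sV \<Longrightarrow> sW c a \<in> R0 sV"
| ideal_left: "a \<in> R0 sV \<Longrightarrow> w \<in> Wc \<Longrightarrow> br w a \<in> R0 sV"
| ideal_right: "a \<in> R0 sV \<Longrightarrow> w \<in> Wc \<Longrightarrow> br a w \<in> R0 sV"

fun actT :: "('g \<Rightarrow> 'v \<Rightarrow> 'v) \<Rightarrow> 'g \<Rightarrow> 'v ltree \<Rightarrow> ('v ltree \<Rightarrow> 'k::field)" where
  "actT act a (Leaf x) = ind (Leaf (act a x))"
| "actT act a (Node s t) = br (actT act a s) (ind t) + br (ind s) (actT act a t)"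

definition actW :: "('g \<Rightarrow> 'v \<Rightarrow> 'v) \<Rightarrow> 'g \<Rightarrow> ('v ltree \<Rightarrow> 'k::field) \<Rightarrow> ('v ltree \<Rightarrow> 'k)" where
  "actW act a f = (\<Sum>t\<in>supp f. sW (f t) (actT act a t))"

text \<open>The map F_{-2} = S^2(V) -> V,  [x,y] |-> {x,y}, on representatives.\<close>
definition symb :: "('k::field \<Rightarrow> 'v::ab_group_add \<Rightarrow> 'v) \<Rightarrow> ('v \<Rightarrow> 'v \<Rightarrow> 'v) \<Rightarrow> 'v ltree \<Rightarrow> 'v" where
  "symb sV circ t = (case t of Node (Leaf x) (Leaf y) \<Rightarrow> anticomm sV circ x y | _ \<Rightarrow> 0)"

definition sym2 :: "('k::field \<Rightarrow> 'v::ab_group_add \<Rightarrow> 'v) \<Rightarrow> ('v \<Rightarrow> 'v \<Rightarrow> 'v) \<Rightarrow> ('v ltree \<Rightarrow> 'k) \<Rightarrow> 'v" where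
  "sym2 sV circ f = (\<Sum>t\<in>supp f. sV (f t) (symb sV circ t))"

text \<open>(preimages in W_2 of) g-submodules of F_{-2} contained in the kernel of sym2\<close>
definition Ksub :: "('k::field \<Rightarrow> 'v::ab_group_add \<Rightarrow> 'v) \<Rightarrow> ('g \<Rightarrow> 'v \<Rightarrow> 'v) \<Rightarrow> ('v \<Rightarrow> 'v \<Rightarrow> 'v)
      \<Rightarrow> ('v ltree \<Rightarrow> 'k) set \<Rightarrow> bool" where
  "Ksub sV act circ S \<longleftrightarrow> S \<subseteq> Wdeg 2 \<and> 0 \<in> S
     \<and> (\<forall>a\<in>S. \<forall>b\<in>S. a + b \<in> S) \<and> (\<forall>c. \<forall>a\<in>S. sW c a \<in> S)
     \<and> (\<forall>g. \<forall>a\<in>S. actW act g a \<in> S)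
     \<and> (\<forall>a\<in>S. sym2 sV circ a = 0)"

text \<open>the largest such submodule (the union of all of them)\<close>
definition Krep :: "('k::field \<Rightarrow> 'v::ab_group_add \<Rightarrow> 'v) \<Rightarrow> ('g \<Rightarrow> 'v \<Rightarrow> 'v) \<Rightarrow> ('v \<Rightarrow> 'v \<Rightarrow> 'v)
      \<Rightarrow> ('v ltree \<Rightarrow> 'k) set" where
  "Krep sV act circ = \<Union>{S. Ksub sV act circ S}"

text \<open>K_{-2} = K,  K_{-i} = sum_{j=1}^{i-2} [F_{-j}, K_{-i+j}]\<close>
inductive KI :: "('k::field \<Rightarrow> 'v::ab_group_add \<Rightarrow> 'v) \<Rightarrow> ('g \<Rightarrow> 'v \<Rightarrow> 'v) \<Rightarrow> ('v \<Rightarrow> 'v \<Rightarrow> 'v)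
      \<Rightarrow> nat \<Rightarrow> ('v ltree \<Rightarrow> 'k) \<Rightarrow> bool"
  for sV act circ where
  base: "w \<in> Krep sV act circ \<Longrightarrow> KI sV act circ 2 w"
| brk: "3 \<le> i \<Longrightarrow> 1 \<le> j \<Longrightarrow> j \<le> i - 2 \<Longrightarrow> f \<in> Wdeg j \<Longrightarrow> KI sV act circ (i - j) k
          \<Longrightarrow> KI sV act circ i (br f k)"
| zero: "3 \<le> i \<Longrightarrow> KI sV act circ i 0"
| add: "3 \<le> i \<Longrightarrow> KI sV act circ i a \<Longrightarrow> KI sV act circ i b \<Longrightarrow> KI sV act circ i (a + b)"
| scale: "3 \<le> i \<Longrightarrow> KI sV act circ i a \<Longrightarrow> KI sV act circ i (sW c a)"

text \<open>Total relation subspace: T_{<=-1} = F / K_\<bullet> = W / Trel\<close>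
inductive_set Trel :: "('k::field \<Rightarrow> 'v::ab_group_add \<Rightarrow> 'v) \<Rightarrow> ('g \<Rightarrow> 'v \<Rightarrow> 'v) \<Rightarrow> ('v \<Rightarrow> 'v \<Rightarrow> 'v)
      \<Rightarrow> ('v ltree \<Rightarrow> 'k) set"
  for sV act circ where
  rel: "a \<in> R0 sV \<Longrightarrow> a \<in> Trel sV act circ"
| kid: "KI sV act circ i a \<Longrightarrow> a \<in> Trel sV act circ"
| add: "a \<in> Trel sV act circ \<Longrightarrow> b \<in> Trel sV act circ \<Longrightarrow> a + b \<in> Trel sV act circ"
| scale: "a \<in> Trel sV act circ \<Longrightarrow> sW c a \<in> Trel sV act circ"

definition qt :: "('v ltree \<Rightarrow> 'k::field) set \<Rightarrow> ('v ltree \<Rightarrow> 'k) \<Rightarrow> ('v ltree \<Rightarrow> 'k) set" where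
  "qt R w = {w'. w' \<in> Wc \<and> w' - w \<in> R}"

definition rep :: "('v ltree \<Rightarrow> 'k::field) set \<Rightarrow> ('v ltree \<Rightarrow> 'k)" where
  "rep C = (SOME w. w \<in> C)"

definition Tdeg :: "('v ltree \<Rightarrow> 'k::field) set \<Rightarrow> nat \<Rightarrow> ('v ltree \<Rightarrow> 'k) set set" where
  "Tdeg R i = qt R ` Wdeg i"

definition tzero :: "('v ltree \<Rightarrow> 'k::field) set \<Rightarrow> ('v ltree \<Rightarrow> 'k) set" where
  "tzero R = qt R 0"

definition tadd :: "('v ltree \<Rightarrow> 'k::field) set \<Rightarrow> ('v ltree \<Rightarrow> 'k) set \<Rightarrow> ('v ltree \<Rightarrow> 'k) set \<Rightarrow> ('v ltree \<Rightarrow> 'k) set" where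
  "tadd R C D = qt R (rep C + rep D)"

definition tsub :: "('v ltree \<Rightarrow> 'k::field) set \<Rightarrow> ('v ltree \<Rightarrow> 'k) set \<Rightarrow> ('v ltree \<Rightarrow> 'k) set \<Rightarrow> ('v ltree \<Rightarrow> 'k) set" where
  "tsub R C D = qt R (rep C - rep D)"

definition tsc :: "('v ltree \<Rightarrow> 'k::field) set \<Rightarrow> 'k \<Rightarrow> ('v ltree \<Rightarrow> 'k) set \<Rightarrow> ('v ltree \<Rightarrow> 'k) set" where
  "tsc R c C = qt R (sW c (rep C))"

definition tbr :: "('v ltree \<Rightarrow> 'k::field) set \<Rightarrow> ('v ltree \<Rightarrow> 'k) set \<Rightarrow> ('v ltree \<Rightarrow> 'k) set \<Rightarrow> ('v ltree \<Rightarrow> 'k) set" where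
  "tbr R C D = qt R (br (rep C) (rep D))"

definition tact :: "('g \<Rightarrow> 'v \<Rightarrow> 'v) \<Rightarrow> ('v ltree \<Rightarrow> 'k::field) set \<Rightarrow> 'g \<Rightarrow> ('v ltree \<Rightarrow> 'k) set \<Rightarrow> ('v ltree \<Rightarrow> 'k) set" where
  "tact act R a C = qt R (actW act a (rep C))"

definition iota :: "('v ltree \<Rightarrow> 'k::field) set \<Rightarrow> 'v \<Rightarrow> ('v ltree \<Rightarrow> 'k) set" where
  "iota R x = qt R (ind (Leaf x))"

text \<open>d i stands for \<partial>_{-i} : T_{-i-1} -> T_{-i}  (i >= 1).\<close>
definition is_dfamily :: "('k::field \<Rightarrow> 'v::ab_group_add \<Rightarrow> 'v) \<Rightarrow> ('g \<Rightarrow> 'v \<Rightarrow> 'v) \<Rightarrow> ('v \<Rightarrow> 'v \<Rightarrow> 'v)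
     \<Rightarrow> ('v \<Rightarrow> 'g) \<Rightarrow> (nat \<Rightarrow> ('v ltree \<Rightarrow> 'k) set \<Rightarrow> ('v ltree \<Rightarrow> 'k) set) \<Rightarrow> bool" where
  "is_dfamily sV act circ Theta d \<longleftrightarrow>
    (let R = Trel sV act circ in
     \<comment> \<open>linear maps T_{-i-1} -> T_{-i}\<close>
     (\<forall>i\<ge>1. \<forall>X\<in>Tdeg R (Suc i). d i X \<in> Tdeg R i)
   \<and> (\<forall>i\<ge>1. \<forall>X\<in>Tdeg R (Suc i). \<forall>Y\<in>Tdeg R (Suc i). d i (tadd R X Y) = tadd R (d i X) (d i Y))
   \<and> (\<forall>i\<ge>1. \<forall>c. \<forall>X\<in>Tdeg R (Suc i). d i (tsc R c X) = tsc R c (d i X))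
     \<comment> \<open>h-equivariance, h = Im Theta\<close>
   \<and> (\<forall>i\<ge>1. \<forall>a\<in>range Theta. \<forall>X\<in>Tdeg R (Suc i). d i (tact act R a X) = tact act R a (d i X))
     \<comment> \<open>d [[u,v]] = 2{u,v}\<close>
   \<and> (\<forall>x y. d 1 (tbr R (iota R x) (iota R y)) = iota R (sV 2 (anticomm sV circ x y)))
     \<comment> \<open>d [[u,X]] = Theta(u).X - [[u, d X]]\<close>
   \<and> (\<forall>x. \<forall>i\<ge>2. \<forall>X\<in>Tdeg R i.
        d i (tbr R (iota R x) X) = tsub R (tact act R (Theta x) X) (tbr R (iota R x) (d (i - 1) X)))
     \<comment> \<open>d [[X,Y]] = [[d X, Y]] + (-1)^|X| [[X, d Y]]\<close>
   \<and> (\<forall>i\<ge>2. \<forall>j\<ge>2. \<forall>X\<in>Tdeg R i. \<forall>Y\<in>Tdeg R j.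
        d (i + j - 1) (tbr R X Y) = tadd R (tbr R (d (i - 1) X) Y) (tsc R ((-1) ^ i) (tbr R X (d (j - 1) Y)))))"

end

theory Submission
  imports Defs
begin

text \<open>
  The differential is first defined on representatives, formal combinations of trees with leaves
  in \<open>V\<close>: \<open>\<partial>\<close> kills leaves and
  \<open>\<partial>[s, t] = \<Theta>(s)\<cdot>t + [\<partial>s, t] + (-1)\<^bsup>|s|\<^esup> ([s, \<partial>t] - \<Theta>(t)\<cdot>s)\<close>,
  where \<open>\<Theta>(s)\<cdot>t\<close> is the action of \<open>\<Theta>(u)\<close> on \<open>t\<close> if \<open>s\<close> is a leaf \<open>u\<close>, and \<open>0\<close> otherwise; so
  \<open>\<partial>[u, v] = 2{u, v}\<close>.  This map sends the relations of the free graded Lie algebra into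
  themselves, and \<open>K\<close> into them because \<open>2{.,.}\<close> vanishes on \<open>K\<close>; hence it descends to \<open>T\<close>,
  where the three bracket rules hold by construction.  Equivariance under \<open>\<Theta>(V)\<close> and
  \<open>\<partial>\<^sup>2 = 0\<close> already hold modulo relations, by \<open>\<Theta>(u\<circ>v) = [\<Theta> u, \<Theta> v]\<close>.  Uniqueness follows by
  induction on the degree: \<open>T\<close> is generated by \<open>T\<^sub>-\<^sub>1\<close>, so every element of \<open>T\<^sub>-\<^sub>i\<^sub>-\<^sub>1\<close> is a
  combination of brackets to which one of the three rules applies.
\<close>

declare plus_fun_apply[simp del] zero_fun_apply[simp del] times_fun_apply[simp del]
  one_fun_apply[simp del] minus_apply[simp del] uminus_apply[simp del]
lemmas fun_applies = plus_fun_apply zero_fun_apply minus_apply uminus_apply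

section \<open>Formal linear combinations of trees\<close>

lemma sum_fun_apply: "(\<Sum>a\<in>A. f a) x = (\<Sum>a\<in>A. f a x)"
  by (induction A rule: infinite_finite_induct) (auto simp: fun_applies)

lemma supp_ind[simp]: "supp (ind t :: 'v ltree \<Rightarrow> 'k::field) = {t}"
  by (auto simp: supp_def ind_def)

lemma ind_Wc[simp]: "(ind t :: 'v ltree \<Rightarrow> 'k::field) \<in> Wc"
  by (simp add: Wc_def)

lemma zero_Wc[simp]: "(0 :: 'v ltree \<Rightarrow> 'k::field) \<in> Wc"
  by (simp add: Wc_def supp_def fun_applies)

lemma add_Wc[simp]: "f \<in> Wc \<Longrightarrow> g \<in> Wc \<Longrightarrow> f + g \<in> (Wc :: ('v ltree \<Rightarrow> 'k::field) set)"
  unfolding Wc_def mem_Collect_eq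
  by (rule finite_subset[of _ "supp f \<union> supp g"]) (auto simp: supp_def fun_applies)

lemma uminus_Wc[simp]: "f \<in> Wc \<Longrightarrow> - f \<in> (Wc :: ('v ltree \<Rightarrow> 'k::field) set)"
  unfolding Wc_def by (auto simp: supp_def uminus_apply)

lemma diff_Wc[simp]: "f \<in> Wc \<Longrightarrow> g \<in> Wc \<Longrightarrow> f - g \<in> (Wc :: ('v ltree \<Rightarrow> 'k::field) set)"
  using add_Wc[of f "-g"] by simp

lemma sW_Wc[simp]: "f \<in> Wc \<Longrightarrow> sW c f \<in> (Wc :: ('v ltree \<Rightarrow> 'k::field) set)"
  unfolding Wc_def mem_Collect_eq
  by (rule finite_subset[of _ "supp f"]) (auto simp: supp_def sW_def)

lemma sum_Wc[simp]:
  "(\<And>a. a \<in> A \<Longrightarrow> f a \<in> Wc) \<Longrightarrow> (\<Sum>a\<in>A. f a) \<in> (Wc :: ('v ltree \<Rightarrow> 'k::field) set)"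
  by (induction A rule: infinite_finite_induct) auto

lemma br_apply_Node[simp]: "br f g (Node s t) = f s * g t"
  and br_apply_Leaf[simp]: "br f g (Leaf x) = 0"
  by (simp_all add: br_def)

lemma br_Wc[simp]: "f \<in> Wc \<Longrightarrow> g \<in> Wc \<Longrightarrow> br f g \<in> (Wc :: ('v ltree \<Rightarrow> 'k::field) set)"
  unfolding Wc_def mem_Collect_eq
proof (rule finite_subset[of _ "(\<lambda>(s,t). Node s t) ` (supp f \<times> supp g)"])
  show "supp (br f g) \<subseteq> (\<lambda>(s,t). Node s t) ` (supp f \<times> supp g)"
  proof
    fix r assume "r \<in> supp (br f g)"
    then show "r \<in> (\<lambda>(s,t). Node s t) ` (supp f \<times> supp g)"
      by (cases r) (auto simp: supp_def)
  qed
qed auto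

lemma sW_simps[simp]:
  "sW c (f + g) = sW c f + sW c g" "sW c (f - g) = sW c f - sW c g" "sW c (- f) = - sW c f"
  "sW c (sW d f) = sW (c * d) f" "sW 1 f = f" "sW 0 f = 0" "sW c 0 = 0" "sW (-1) f = - f"
  by (auto simp: sW_def fun_eq_iff algebra_simps fun_applies)

lemma sW_neg: "sW (- c) f = - sW c f"
  by (simp add: sW_def fun_eq_iff uminus_apply)

lemma sW_apply: "sW c f x = c * f x"
  by (simp add: sW_def)

lemma sW_add_left: "sW (c + d) f = sW c f + sW d f"
  and sW_diff_left: "sW (c - d) f = sW c f - sW d f"
  by (auto simp: sW_def fun_eq_iff algebra_simps fun_applies)

lemma sW_sum: "sW c (\<Sum>a\<in>A. f a) = (\<Sum>a\<in>A. sW c (f a))"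
  by (induction A rule: infinite_finite_induct) auto

lemma br_simps[simp]:
  "br (f + g) h = br f h + br g h" "br f (g + h) = br f g + br f h"
  "br (f - g) h = br f h - br g h" "br f (g - h) = br f g - br f h"
  "br (- f) h = - br f h" "br f (- h) = - br f h"
  "br (sW c f) g = sW c (br f g)" "br f (sW c g) = sW c (br f g)"
  "br 0 g = 0" "br f 0 = 0"
  by (auto simp: br_def fun_eq_iff algebra_simps fun_applies sW_def split: ltree.splits)

lemma br_ind_ind[simp]: "br (ind s) (ind t) = ind (Node s t)"
  by (auto simp: br_def ind_def fun_eq_iff split: ltree.splits)

lemma nleaves_ge1: "1 \<le> nleaves t"
  by (induction t) auto

lemma nleaves_eq_1: "nleaves t = 1 \<Longrightarrow> \<exists>x. t = Leaf x"
proof (cases t)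
  case (Node s r)
  assume "nleaves t = 1"
  then show ?thesis using Node nleaves_ge1[of s] nleaves_ge1[of r] by simp
qed simp

lemma nleaves_eq_2: "nleaves t = 2 \<Longrightarrow> \<exists>x y. t = Node (Leaf x) (Leaf y)"
proof (cases t)
  case (Node s r)
  assume "nleaves t = 2"
  then have "nleaves s = 1" "nleaves r = 1" using Node nleaves_ge1[of s] nleaves_ge1[of r] by auto
  then show ?thesis using Node nleaves_eq_1 by blast
qed simp

lemma nleaves_Node_ge2: "2 \<le> nleaves (Node s t)"
  using nleaves_ge1[of s] nleaves_ge1[of t] by simp

definition lin_ext :: "('v ltree \<Rightarrow> ('v ltree \<Rightarrow> 'k::field)) \<Rightarrow> ('v ltree \<Rightarrow> 'k) \<Rightarrow> ('v ltree \<Rightarrow> 'k)" where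
  "lin_ext \<phi> f = (\<Sum>t\<in>supp f. sW (f t) (\<phi> t))"

lemma lin_ext_superset: "finite A \<Longrightarrow> supp f \<subseteq> A \<Longrightarrow> lin_ext \<phi> f = (\<Sum>t\<in>A. sW (f t) (\<phi> t))"
  unfolding lin_ext_def by (rule sum.mono_neutral_left) (auto simp: supp_def)

lemma lin_ext_add[simp]: "f \<in> Wc \<Longrightarrow> g \<in> Wc \<Longrightarrow> lin_ext \<phi> (f + g) = lin_ext \<phi> f + lin_ext \<phi> g"
proof -
  assume f: "f \<in> Wc" and g: "g \<in> Wc"
  let ?A = "supp f \<union> supp g"
  have fin: "finite ?A" using f g by (auto simp: Wc_def)
  have "lin_ext \<phi> (f + g) = (\<Sum>t\<in>?A. sW ((f+g) t) (\<phi> t))"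
    by (rule lin_ext_superset[OF fin]) (auto simp: supp_def fun_applies)
  also have "\<dots> = (\<Sum>t\<in>?A. sW (f t) (\<phi> t)) + (\<Sum>t\<in>?A. sW (g t) (\<phi> t))"
    by (simp add: sW_add_left sum.distrib plus_fun_apply)
  also have "\<dots> = lin_ext \<phi> f + lin_ext \<phi> g"
    using lin_ext_superset[OF fin, of f] lin_ext_superset[OF fin, of g] by auto
  finally show ?thesis .
qed

lemma lin_ext_sW[simp]: "lin_ext \<phi> (sW c f) = sW c (lin_ext \<phi> f)"
proof (cases "c = 0")
  case True
  then show ?thesis by (simp add: lin_ext_def supp_def fun_applies)
next
  case False
  then have "supp (sW c f) = supp f" by (auto simp: supp_def sW_apply)
  then show ?thesis by (simp add: lin_ext_def sW_sum sW_apply)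
qed

lemma lin_ext_zero[simp]: "lin_ext \<phi> 0 = 0"
  by (simp add: lin_ext_def supp_def fun_applies)

lemma lin_ext_uminus[simp]: "lin_ext \<phi> (- f) = - lin_ext \<phi> f"
  using lin_ext_sW[of \<phi> "-1" f] by simp

lemma lin_ext_diff[simp]: "f \<in> Wc \<Longrightarrow> g \<in> Wc \<Longrightarrow> lin_ext \<phi> (f - g) = lin_ext \<phi> f - lin_ext \<phi> g"
  using lin_ext_add[of f "-g" \<phi>] by simp

lemma lin_ext_ind[simp]: "lin_ext \<phi> (ind t) = \<phi> t"
  by (simp add: lin_ext_def ind_def supp_def)

lemma lin_ext_Wc[simp]: "(\<And>t. \<phi> t \<in> Wc) \<Longrightarrow> lin_ext \<phi> f \<in> Wc"
  by (simp add: lin_ext_def)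

lemma lin_ext_zero_on: "(\<And>t. t \<in> supp f \<Longrightarrow> \<phi> t = 0) \<Longrightarrow> lin_ext \<phi> f = 0"
  by (simp add: lin_ext_def)

lemma lin_ext_fun_diff: "lin_ext (\<lambda>t. \<phi> t - \<psi> t) f = lin_ext \<phi> f - lin_ext \<psi> f"
  by (simp add: lin_ext_def sum_subtractf)

lemma lin_ext_ind_self: "f \<in> Wc \<Longrightarrow> lin_ext ind f = f"
proof
  fix r assume f: "f \<in> Wc"
  have "lin_ext ind f r = (\<Sum>t\<in>supp f. f t * ind t r)"
    by (simp add: lin_ext_def sum_fun_apply sW_apply)
  also have "\<dots> = (\<Sum>t\<in>supp f. if t = r then f r else 0)"
    by (rule sum.cong) (auto simp: ind_def)
  also have "\<dots> = f r" using f by (auto simp: Wc_def supp_def)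
  finally show "lin_ext ind f r = f r" .
qed

lemma lin_ext_br_Node_zero: "(\<And>s t. \<phi> (Node s t) = 0) \<Longrightarrow> lin_ext \<phi> (br f g) = 0"
proof (rule lin_ext_zero_on)
  fix t assume "\<And>s t. \<phi> (Node s t) = 0" "t \<in> supp (br f g)"
  then show "\<phi> t = 0" by (cases t) (auto simp: supp_def)
qed

lemma Wdeg_Wc: "f \<in> Wdeg i \<Longrightarrow> f \<in> Wc"
  by (simp add: Wdeg_def Wc_def)

lemma zero_Wdeg[simp]: "(0 :: 'v ltree \<Rightarrow> 'k::field) \<in> Wdeg i"
  by (simp add: Wdeg_def supp_def fun_applies)

lemma add_Wdeg[simp]: "f \<in> Wdeg i \<Longrightarrow> g \<in> Wdeg i \<Longrightarrow> f + g \<in> (Wdeg i :: ('v ltree \<Rightarrow> 'k::field) set)"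
  unfolding Wdeg_def mem_Collect_eq
  by (auto simp: plus_fun_apply intro: finite_subset[of _ "supp f \<union> supp g"] simp: supp_def)
    (metis add.right_neutral)

lemma sW_Wdeg[simp]: "f \<in> Wdeg i \<Longrightarrow> sW c f \<in> (Wdeg i :: ('v ltree \<Rightarrow> 'k::field) set)"
  unfolding Wdeg_def mem_Collect_eq
  by (auto simp: sW_apply intro: finite_subset[of _ "supp f"] simp: supp_def)

lemma uminus_Wdeg[simp]: "f \<in> Wdeg i \<Longrightarrow> - f \<in> (Wdeg i :: ('v ltree \<Rightarrow> 'k::field) set)"
  using sW_Wdeg[of f i "-1"] by simp

lemma diff_Wdeg[simp]: "f \<in> Wdeg i \<Longrightarrow> g \<in> Wdeg i \<Longrightarrow> f - g \<in> (Wdeg i :: ('v ltree \<Rightarrow> 'k::field) set)"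
  using add_Wdeg[of f i "-g"] by simp

lemma ind_Wdeg: "nleaves t = i \<Longrightarrow> (ind t :: 'v ltree \<Rightarrow> 'k::field) \<in> Wdeg i"
  by (auto simp: Wdeg_def ind_def supp_def)

lemma sum_Wdeg[simp]:
  "(\<And>a. a \<in> A \<Longrightarrow> f a \<in> Wdeg i) \<Longrightarrow> (\<Sum>a\<in>A. f a) \<in> (Wdeg i :: ('v ltree \<Rightarrow> 'k::field) set)"
  by (induction A rule: infinite_finite_induct) auto

lemma br_Wdeg[simp]:
  "f \<in> Wdeg i \<Longrightarrow> g \<in> Wdeg j \<Longrightarrow> br f g \<in> (Wdeg (i + j) :: ('v ltree \<Rightarrow> 'k::field) set)"
proof -
  assume f: "f \<in> Wdeg i" and g: "g \<in> Wdeg j"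
  have "br f g t \<noteq> 0 \<Longrightarrow> nleaves t = i + j" for t
    using f g by (cases t) (auto simp: Wdeg_def)
  moreover have "br f g \<in> Wc" using f g by (simp add: Wdeg_Wc)
  ultimately show ?thesis by (simp add: Wdeg_def Wc_def)
qed

lemma Wdeg_0: assumes f: "f \<in> Wdeg 0" shows "f = 0"
proof
  fix t
  show "f t = 0 t" using nleaves_ge1[of t] f by (auto simp: Wdeg_def zero_fun_apply)
qed

lemma lin_ext_Wdeg: "f \<in> Wdeg i \<Longrightarrow> (\<And>t. nleaves t = i \<Longrightarrow> \<phi> t \<in> Wdeg j) \<Longrightarrow> lin_ext \<phi> f \<in> Wdeg j"
  unfolding lin_ext_def
proof (rule sum_Wdeg)
  fix t assume "f \<in> Wdeg i" "\<And>t. nleaves t = i \<Longrightarrow> \<phi> t \<in> Wdeg j" "t \<in> supp f"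
  then show "sW (f t) (\<phi> t) \<in> Wdeg j" by (simp add: supp_def Wdeg_def[of i])
qed

lemma lin_ext_Wdeg_Node_zero:
  "f \<in> Wdeg m \<Longrightarrow> 2 \<le> m \<Longrightarrow> (\<And>s t. \<phi> (Node s t) = 0) \<Longrightarrow> lin_ext \<phi> f = 0"
proof (rule lin_ext_zero_on)
  fix t assume "f \<in> Wdeg m" "2 \<le> m" "\<And>s t. \<phi> (Node s t) = 0" "t \<in> supp f"
  then show "\<phi> t = 0" by (cases t) (auto simp: supp_def Wdeg_def)
qed

lemma Wc_induct[consumes 1, case_names zero step]:
  assumes f: "f \<in> Wc" and zero: "P 0"
    and step: "\<And>c t g. g \<in> Wc \<Longrightarrow> P g \<Longrightarrow> P (sW c (ind t) + g)"
  shows "P f"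
proof -
  have fin: "finite (supp f)" using f by (simp add: Wc_def)
  have "B \<subseteq> supp f \<Longrightarrow> P (\<Sum>t\<in>B. sW (f t) (ind t)) \<and> (\<Sum>t\<in>B. sW (f t) (ind t)) \<in> Wc" for B
  proof -
    assume "B \<subseteq> supp f"
    then have "finite B" using fin finite_subset by blast
    then show ?thesis by (induction B rule: finite_induct) (auto simp: zero step)
  qed
  from this[OF order_refl] show ?thesis using lin_ext_ind_self[OF f] by (simp add: lin_ext_def)
qed

lemma Wdeg_induct[consumes 1, case_names zero step]:
  assumes f: "f \<in> Wdeg i" and zero: "P 0"
    and step: "\<And>c t g. nleaves t = i \<Longrightarrow> g \<in> Wdeg i \<Longrightarrow> P g \<Longrightarrow> P (sW c (ind t) + g)"
  shows "P f"
proof -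
  have deg: "t \<in> supp f \<Longrightarrow> nleaves t = i" for t using f by (auto simp: Wdeg_def supp_def)
  have fin: "finite (supp f)" using f by (simp add: Wdeg_def)
  have "B \<subseteq> supp f \<Longrightarrow> P (\<Sum>t\<in>B. sW (f t) (ind t)) \<and> (\<Sum>t\<in>B. sW (f t) (ind t)) \<in> Wdeg i" for B
  proof -
    assume B: "B \<subseteq> supp f"
    then have "finite B" using fin finite_subset by blast
    then show ?thesis using B
    proof (induction B rule: finite_induct)
      case (insert t B)
      then have nt: "nleaves t = i" and IH: "P (\<Sum>t\<in>B. sW (f t) (ind t))" "(\<Sum>t\<in>B. sW (f t) (ind t)) \<in> Wdeg i"
        using deg by auto
      then show ?case using insert step[OF nt IH(2,1)] by (simp add: ind_Wdeg)
    qed (simp add: zero)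
  qed
  from this[OF order_refl] show ?thesis using lin_ext_ind_self[OF Wdeg_Wc[OF f]] by (simp add: lin_ext_def)
qed

definition comb_subspace :: "('v ltree \<Rightarrow> 'k::field) set \<Rightarrow> bool" where
  "comb_subspace S \<longleftrightarrow> 0 \<in> S \<and> (\<forall>a\<in>S. \<forall>b\<in>S. a + b \<in> S) \<and> (\<forall>c. \<forall>a\<in>S. sW c a \<in> S)"

lemma comb_subspace_0: "comb_subspace S \<Longrightarrow> 0 \<in> S"
  and comb_subspace_add: "comb_subspace S \<Longrightarrow> a \<in> S \<Longrightarrow> b \<in> S \<Longrightarrow> a + b \<in> S"
  and comb_subspace_sW: "comb_subspace S \<Longrightarrow> a \<in> S \<Longrightarrow> sW c a \<in> S"
  by (simp_all add: comb_subspace_def)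

lemma comb_subspace_uminus: "comb_subspace S \<Longrightarrow> a \<in> S \<Longrightarrow> - a \<in> S"
  using comb_subspace_sW[of S a "-1"] by simp

lemma comb_subspace_diff: "comb_subspace S \<Longrightarrow> a \<in> S \<Longrightarrow> b \<in> S \<Longrightarrow> a - b \<in> S"
  using comb_subspace_add[of S a "-b"] comb_subspace_uminus[of S b] by simp

lemma comb_subspace_sum: "comb_subspace S \<Longrightarrow> (\<And>x. x \<in> A \<Longrightarrow> f x \<in> S) \<Longrightarrow> (\<Sum>x\<in>A. f x) \<in> S"
  by (induction A rule: infinite_finite_induct) (auto simp: comb_subspace_0 comb_subspace_add)

lemma lin_ext_into_subspace:
  "comb_subspace S \<Longrightarrow> (\<And>t. t \<in> supp f \<Longrightarrow> \<phi> t \<in> S) \<Longrightarrow> lin_ext \<phi> f \<in> S"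
  unfolding lin_ext_def by (intro comb_subspace_sum) (auto intro: comb_subspace_sW)

lemma linear_zero:
  assumes "\<And>c f. f \<in> Wc \<Longrightarrow> L (sW c f) = sW c (L f)"
  shows "L 0 = 0"
  using assms[of 0 0] by simp

lemma Wc_linear_into_subspace:
  assumes S: "comb_subspace S"
    and add: "\<And>f g. f \<in> Wc \<Longrightarrow> g \<in> Wc \<Longrightarrow> L (f + g) = L f + L g"
    and scale: "\<And>c f. f \<in> Wc \<Longrightarrow> L (sW c f) = sW c (L f)"
    and gen: "\<And>t. L (ind t) \<in> S"
    and f: "f \<in> Wc"
  shows "L f \<in> S"
  using f
proof (induction rule: Wc_induct)
  case zero
  then show ?case using linear_zero[OF scale] comb_subspace_0[OF S] by simp
next
  case (step c t g)
  then show ?case using add scale gen S by (simp add: comb_subspace_add comb_subspace_sW)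
qed

lemma Wdeg_linear_into_subspace:
  assumes S: "comb_subspace S"
    and add: "\<And>f g. L (f + g) = L f + L g" and scale: "\<And>c f. L (sW c f) = sW c (L f)"
    and gen: "\<And>t. nleaves t = i \<Longrightarrow> L (ind t) \<in> S"
    and f: "f \<in> Wdeg i"
  shows "L f \<in> S"
  using f
proof (induction rule: Wdeg_induct)
  case zero
  then show ?case using linear_zero[OF scale] comb_subspace_0[OF S] by simp
next
  case (step c t g)
  then show ?case using add scale gen S by (simp add: comb_subspace_add comb_subspace_sW)
qed

lemma Wc_linear_eqI:
  assumes addL: "\<And>f g. f \<in> Wc \<Longrightarrow> g \<in> Wc \<Longrightarrow> L (f + g) = L f + L g"
    and scaleL: "\<And>c f. f \<in> Wc \<Longrightarrow> L (sW c f) = sW c (L f)"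
    and addM: "\<And>f g. f \<in> Wc \<Longrightarrow> g \<in> Wc \<Longrightarrow> M (f + g) = M f + M g"
    and scaleM: "\<And>c f. f \<in> Wc \<Longrightarrow> M (sW c f) = sW c (M f)"
    and gen: "\<And>t. L (ind t) = M (ind t)"
    and f: "f \<in> (Wc :: ('v ltree \<Rightarrow> 'k::field) set)"
  shows "L f = M f"
  using f
proof (induction rule: Wc_induct)
  case zero
  then show ?case using linear_zero[OF scaleL] linear_zero[OF scaleM] by simp
next
  case (step c t g)
  then show ?case using addL addM scaleL scaleM gen by simp
qed

lemma lin_ext_comp: "f \<in> Wc \<Longrightarrow> (\<And>t. \<psi> t \<in> Wc) \<Longrightarrow> lin_ext \<phi> (lin_ext \<psi> f) = lin_ext (\<lambda>t. lin_ext \<phi> (\<psi> t)) f"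
  by (rule Wc_linear_eqI[where L = "\<lambda>f. lin_ext \<phi> (lin_ext \<psi> f)"]) simp_all

section \<open>The relations of the free graded Lie algebra\<close>

definition jacobiator :: "'k::field \<Rightarrow> ('v ltree \<Rightarrow> 'k) \<Rightarrow> ('v ltree \<Rightarrow> 'k) \<Rightarrow> ('v ltree \<Rightarrow> 'k) \<Rightarrow> ('v ltree \<Rightarrow> 'k)" where
  "jacobiator \<sigma> f g h = br f (br g h) - br (br f g) h - sW \<sigma> (br g (br f h))"

lemma jacobiator_simps:
  "jacobiator \<sigma> (f1 + f2) g h = jacobiator \<sigma> f1 g h + jacobiator \<sigma> f2 g h"
  "jacobiator \<sigma> f (g1 + g2) h = jacobiator \<sigma> f g1 h + jacobiator \<sigma> f g2 h"
  "jacobiator \<sigma> f g (h1 + h2) = jacobiator \<sigma> f g h1 + jacobiator \<sigma> f g h2"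
  "jacobiator \<sigma> (sW c f) g h = sW c (jacobiator \<sigma> f g h)"
  "jacobiator \<sigma> f (sW c g) h = sW c (jacobiator \<sigma> f g h)"
  "jacobiator \<sigma> f g (sW c h) = sW c (jacobiator \<sigma> f g h)"
  by (simp_all add: jacobiator_def algebra_simps)

lemma R0_jacobiator: "jacobiator ((-1) ^ (nleaves x * nleaves y)) (ind x) (ind y) (ind z) \<in> R0 sV"
  using R0.jacobi[folded jacobiator_def] .

lemma R0_Wc: "a \<in> R0 sV \<Longrightarrow> a \<in> Wc"
  by (induction rule: R0.induct) (auto simp: jacobiator_def)

lemma comb_subspace_R0: "comb_subspace (R0 sV)"
  by (simp add: comb_subspace_def R0.zero R0.add R0.scale)

lemma R0_linear_image:
  assumes r: "r \<in> R0 sV" and S: "comb_subspace S"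
    and L_add: "\<And>f g. f \<in> Wc \<Longrightarrow> g \<in> Wc \<Longrightarrow> L (f + g) = L f + L g"
    and L_scale: "\<And>c f. f \<in> Wc \<Longrightarrow> L (sW c f) = sW c (L f)"
    and gen_add: "\<And>x y. L (ind (Leaf (x + y)) - ind (Leaf x) - ind (Leaf y)) \<in> S"
    and gen_scale: "\<And>c x. L (ind (Leaf (sV c x)) - sW c (ind (Leaf x))) \<in> S"
    and gen_antisym: "\<And>s t. L (ind (Node s t) + sW ((-1) ^ (nleaves s * nleaves t)) (ind (Node t s))) \<in> S"
    and gen_jacobi: "\<And>x y z. L (jacobiator ((-1) ^ (nleaves x * nleaves y)) (ind x) (ind y) (ind z)) \<in> S"
    and left: "\<And>a t. a \<in> R0 sV \<Longrightarrow> L a \<in> S \<Longrightarrow> L (br (ind t) a) \<in> S"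
    and right: "\<And>a t. a \<in> R0 sV \<Longrightarrow> L a \<in> S \<Longrightarrow> L (br a (ind t)) \<in> S"
  shows "L r \<in> S"
  using r
proof (induction rule: R0.induct)
  case (antisym s t)
  then show ?case using gen_antisym by simp
next
  case (jacobi x y z)
  then show ?case using gen_jacobi[of x y z] by (simp add: jacobiator_def del: br_ind_ind)
next
  case zero
  then show ?case using linear_zero[OF L_scale] comb_subspace_0[OF S] by simp
next
  case (add a b)
  then show ?case using R0_Wc[of a sV] R0_Wc[of b sV] L_add comb_subspace_add[OF S] by simp
next
  case (scale a c)
  then show ?case using R0_Wc[of a sV] L_scale comb_subspace_sW[OF S] by simp
next
  case (ideal_left a w)
  show ?case
    by (rule Wc_linear_into_subspace[OF S _ _ _ ideal_left(2), where L = "\<lambda>w. L (br w a)"])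
      (use ideal_left R0_Wc[of a sV] in \<open>simp_all add: L_add L_scale left\<close>)
next
  case (ideal_right a w)
  show ?case
    by (rule Wc_linear_into_subspace[OF S _ _ _ ideal_right(2), where L = "\<lambda>w. L (br a w)"])
      (use ideal_right R0_Wc[of a sV] in \<open>simp_all add: L_add L_scale right\<close>)
qed (use gen_add gen_scale in simp_all)

lemma R0_antisym_Wdeg:
  assumes f: "f \<in> Wdeg i" and g: "g \<in> Wdeg j"
  shows "br f g + sW ((-1) ^ (i * j)) (br g f) \<in> R0 sV"
proof -
  have "br (ind s) g + sW ((-1) ^ (i * j)) (br g (ind s)) \<in> R0 sV" if s: "nleaves s = i" for s
  proof (rule Wdeg_linear_into_subspace[OF comb_subspace_R0 _ _ _ g,
        where L = "\<lambda>g. br (ind s) g + sW ((-1) ^ (i * j)) (br g (ind s))"])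
    fix t :: "'a ltree" assume "nleaves t = j"
    then show "br (ind s) (ind t) + sW ((-1) ^ (i * j)) (br (ind t) (ind s)) \<in> R0 sV"
      using R0.antisym[of s t sV] s by simp
  qed (simp_all add: algebra_simps)
  then show ?thesis
    by (intro Wdeg_linear_into_subspace[OF comb_subspace_R0 _ _ _ f,
          where L = "\<lambda>f. br f g + sW ((-1) ^ (i * j)) (br g f)"]) (simp_all add: algebra_simps)
qed

lemma R0_jacobiator_Wdeg:
  assumes f: "f \<in> Wdeg i" and g: "g \<in> Wdeg j" and h: "h \<in> Wdeg k"
  shows "jacobiator ((-1) ^ (i * j)) f g h \<in> R0 sV"
proof -
  have "jacobiator ((-1) ^ (i * j)) (ind x) (ind y) h \<in> R0 sV"
    if "nleaves x = i" "nleaves y = j" for x y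
    by (rule Wdeg_linear_into_subspace[OF comb_subspace_R0 _ _ _ h])
      (use R0_jacobiator[of x y _ sV] that in \<open>simp_all add: jacobiator_simps\<close>)
  then have "jacobiator ((-1) ^ (i * j)) (ind x) g h \<in> R0 sV" if "nleaves x = i" for x
    by (intro Wdeg_linear_into_subspace[OF comb_subspace_R0 _ _ _ g,
          where L = "\<lambda>g. jacobiator ((-1) ^ (i * j)) (ind x) g h"]) (simp_all add: jacobiator_simps that)
  then show ?thesis
    by (intro Wdeg_linear_into_subspace[OF comb_subspace_R0 _ _ _ f,
          where L = "\<lambda>f. jacobiator ((-1) ^ (i * j)) f g h"]) (simp_all add: jacobiator_simps)
qed

lemma actW_lin_ext: "actW act a = lin_ext (actT act a)"
  by (simp add: fun_eq_iff actW_def lin_ext_def)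

lemma actT_Wdeg[simp]: "(actT act a t :: 'v ltree \<Rightarrow> 'k::field) \<in> Wdeg (nleaves t)"
  by (induction t) (auto simp: ind_Wdeg)

lemma actT_Wc[simp]: "actT act a t \<in> Wc"
  using Wdeg_Wc[OF actT_Wdeg] .

lemma actW_Wc[simp]: "actW act a f \<in> Wc"
  by (simp add: actW_lin_ext)

lemma actW_Wdeg[simp]: "f \<in> Wdeg i \<Longrightarrow> actW act a f \<in> Wdeg i"
  unfolding actW_lin_ext by (rule lin_ext_Wdeg) auto

lemma actW_simps[simp]:
  "f \<in> Wc \<Longrightarrow> g \<in> Wc \<Longrightarrow> actW act a (f + g) = actW act a f + actW act a g"
  "f \<in> Wc \<Longrightarrow> g \<in> Wc \<Longrightarrow> actW act a (f - g) = actW act a f - actW act a g"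
  "actW act a (sW c f) = sW c (actW act a f)"
  "actW act a (- f) = - actW act a f"
  "actW act a 0 = 0"
  "actW act a (ind t) = actT act a t"
  by (simp_all add: actW_lin_ext)

lemma actW_br:
  assumes f: "f \<in> Wc" and g: "g \<in> Wc"
  shows "actW act a (br f g) = br (actW act a f) g + br f (actW act a g)"
proof -
  have "actW act a (br (ind s) g) = br (actW act a (ind s)) g + br (ind s) (actW act a g)" for s
    by (rule Wc_linear_eqI[OF _ _ _ _ _ g, where L = "\<lambda>g. actW act a (br (ind s) g)"]) simp_all
  then show ?thesis
    by (intro Wc_linear_eqI[OF _ _ _ _ _ f, where L = "\<lambda>f. actW act a (br f g)"]) (simp_all add: g)
qed

lemma actW_jacobiator:
  "f \<in> Wc \<Longrightarrow> g \<in> Wc \<Longrightarrow> h \<in> Wc \<Longrightarrow> actW act a (jacobiator \<sigma> f g h)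
     = jacobiator \<sigma> (actW act a f) g h + jacobiator \<sigma> f (actW act a g) h + jacobiator \<sigma> f g (actW act a h)"
  by (simp add: jacobiator_def actW_br algebra_simps)

lemma actW_R0:
  fixes sV :: "'k::field \<Rightarrow> 'v::ab_group_add \<Rightarrow> 'v"
  assumes r: "r \<in> R0 sV"
    and add: "\<And>x y. act a (x + y) = act a x + act a y"
    and scale: "\<And>c x. act a (sV c x) = sV c (act a x)"
  shows "actW act a r \<in> R0 sV"
proof (rule R0_linear_image[OF r comb_subspace_R0])
  fix x y
  show "actW act a (ind (Leaf (x + y)) - ind (Leaf x) - ind (Leaf y)) \<in> R0 sV"
    using R0.lin_add[of "act a x" "act a y"] by (simp add: add)
next
  fix c x
  show "actW act a (ind (Leaf (sV c x)) - sW c (ind (Leaf x))) \<in> R0 sV"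
    using R0.lin_scale[of sV c "act a x"] by (simp add: scale)
next
  fix s t :: "'v ltree"
  let ?\<sigma> = "(-1) ^ (nleaves s * nleaves t) :: 'k"
  have "actW act a (ind (Node s t) + sW ?\<sigma> (ind (Node t s)))
     = (br (actT act a s) (ind t) + sW ?\<sigma> (br (ind t) (actT act a s)))
     + (br (ind s) (actT act a t) + sW ?\<sigma> (br (actT act a t) (ind s)))"
    by (simp add: algebra_simps)
  also have "\<dots> \<in> R0 sV"
    by (intro R0.add R0_antisym_Wdeg) (auto intro: ind_Wdeg)
  finally show "actW act a (ind (Node s t) + sW ?\<sigma> (ind (Node t s))) \<in> R0 sV" .
next
  fix x y z
  show "actW act a (jacobiator ((-1) ^ (nleaves x * nleaves y)) (ind x) (ind y) (ind z)) \<in> R0 sV"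
    unfolding actW_jacobiator[OF ind_Wc ind_Wc ind_Wc] actW_simps(6)
    by (intro R0.add R0_jacobiator_Wdeg[OF actT_Wdeg ind_Wdeg[OF refl] ind_Wdeg[OF refl]]
        R0_jacobiator_Wdeg[OF ind_Wdeg[OF refl] actT_Wdeg ind_Wdeg[OF refl]]
        R0_jacobiator_Wdeg[OF ind_Wdeg[OF refl] ind_Wdeg[OF refl] actT_Wdeg])
next
  fix b t assume b: "b \<in> R0 sV" "actW act a b \<in> R0 sV"
  show "actW act a (br (ind t) b) \<in> R0 sV" "actW act a (br b (ind t)) \<in> R0 sV"
    using b R0_Wc[OF b(1)] by (simp_all add: actW_br R0.add R0.ideal_left R0.ideal_right)
qed simp_all

definition parity_twist :: "('v ltree \<Rightarrow> 'k::field) \<Rightarrow> ('v ltree \<Rightarrow> 'k)" where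
  "parity_twist f = (\<lambda>t. (-1) ^ nleaves t * f t)"

lemma parity_twist_Wdeg: "f \<in> Wdeg i \<Longrightarrow> parity_twist f = sW ((-1) ^ i) f"
  by (auto simp: parity_twist_def sW_def fun_eq_iff Wdeg_def)

lemma parity_twist_ind: "parity_twist (ind t) = sW ((-1) ^ nleaves t) (ind t)"
  by (rule parity_twist_Wdeg) (simp add: ind_Wdeg)

lemma parity_twist_br: "parity_twist (br f g) = br (parity_twist f) (parity_twist g)"
  by (auto simp: parity_twist_def br_def fun_eq_iff power_add split: ltree.splits)

lemma parity_twist_simps[simp]:
  "parity_twist (f + g) = parity_twist f + parity_twist g"
  "parity_twist (f - g) = parity_twist f - parity_twist g" "parity_twist (- f) = - parity_twist f"
  "parity_twist (sW c f) = sW c (parity_twist f)" "parity_twist 0 = 0"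
  by (auto simp: parity_twist_def sW_def fun_eq_iff algebra_simps fun_applies)

lemma parity_twist_Wc[simp]: "f \<in> Wc \<Longrightarrow> parity_twist f \<in> Wc"
  by (auto simp: parity_twist_def Wc_def supp_def)

lemma parity_twist_R0:
  assumes r: "r \<in> R0 sV"
  shows "parity_twist r \<in> R0 sV"
proof (rule R0_linear_image[OF r comb_subspace_R0])
  have homogeneous: "parity_twist a \<in> R0 sV" if "a \<in> R0 sV" "a \<in> Wdeg i" for a i
    using that by (simp add: parity_twist_Wdeg R0.scale)
  fix x y c
  show "parity_twist (ind (Leaf (x + y)) - ind (Leaf x) - ind (Leaf y)) \<in> R0 sV"
    by (rule homogeneous[OF R0.lin_add, where i = 1]) (simp add: ind_Wdeg)
  show "parity_twist (ind (Leaf (sV c x)) - sW c (ind (Leaf x))) \<in> R0 sV"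
    by (rule homogeneous[OF R0.lin_scale, where i = 1]) (simp add: ind_Wdeg)
next
  fix s t
  show "parity_twist (ind (Node s t) + sW ((-1) ^ (nleaves s * nleaves t)) (ind (Node t s))) \<in> R0 sV"
    using R0.scale[OF R0.antisym[of s t sV], of "(-1) ^ (nleaves s + nleaves t)"]
    by (simp add: parity_twist_ind power_add mult_ac)
next
  fix x y z
  show "parity_twist (jacobiator ((-1) ^ (nleaves x * nleaves y)) (ind x) (ind y) (ind z)) \<in> R0 sV"
    using R0.scale[OF R0_jacobiator[of x y z sV], of "(-1) ^ (nleaves x + nleaves y + nleaves z)"]
    by (simp add: jacobiator_def parity_twist_br parity_twist_ind algebra_simps)
next
  fix a t assume "a \<in> R0 sV" "parity_twist a \<in> R0 sV"
  then show "parity_twist (br (ind t) a) \<in> R0 sV" "parity_twist (br a (ind t)) \<in> R0 sV"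
    by (simp_all add: parity_twist_br parity_twist_ind R0.scale R0.ideal_left R0.ideal_right)
qed simp_all

lemma Krep_Wdeg: "w \<in> Krep sV act circ \<Longrightarrow> w \<in> Wdeg 2"
  by (auto simp: Krep_def Ksub_def)

lemma KI_Wdeg: "KI sV act circ i a \<Longrightarrow> a \<in> Wdeg i \<and> 2 \<le> i"
proof (induction rule: KI.induct)
  case (base w)
  then show ?case using Krep_Wdeg by auto
next
  case (brk i j f k)
  then have "br f k \<in> Wdeg (j + (i - j))" by (intro br_Wdeg) auto
  then show ?case using brk by simp
qed auto

lemma comb_subspace_Trel: "comb_subspace (Trel sV act circ)"
  by (simp add: comb_subspace_def Trel.add Trel.scale Trel.rel R0.zero)

lemma Trel_Wc: "a \<in> Trel sV act circ \<Longrightarrow> a \<in> Wc"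
  by (induction rule: Trel.induct) (auto simp: R0_Wc dest!: KI_Wdeg intro: Wdeg_Wc)

lemma KI_br_left_Trel:
  fixes sV :: "'k::field \<Rightarrow> 'v::ab_group_add \<Rightarrow> 'v"
  assumes k: "KI sV act circ i k" and w: "w \<in> Wc"
  shows "br w k \<in> Trel sV act circ"
proof (rule Wc_linear_into_subspace[OF comb_subspace_Trel _ _ _ w, where L = "\<lambda>w. br w k"])
  fix t :: "'v ltree"
  have "KI sV act circ (i + nleaves t) (br (ind t) k)"
    using k KI_Wdeg[OF k] nleaves_ge1[of t] by (intro KI.brk[where j = "nleaves t"]) (auto simp: ind_Wdeg)
  then show "br (ind t) k \<in> Trel sV act circ" by (rule Trel.kid)
qed simp_all

text \<open>The ideal \<open>K\<^sub>\<bullet>\<close> is only defined through left brackets; right brackets reduce to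
  them by graded antisymmetry.\<close>

lemma KI_br_right_Trel:
  fixes sV :: "'k::field \<Rightarrow> 'v::ab_group_add \<Rightarrow> 'v"
  assumes k: "KI sV act circ i k" and w: "w \<in> Wc"
  shows "br k w \<in> Trel sV act circ"
proof (rule Wc_linear_into_subspace[OF comb_subspace_Trel _ _ _ w, where L = "\<lambda>w. br k w"])
  fix t :: "'v ltree"
  let ?\<sigma> = "(-1) ^ (i * nleaves t) :: 'k"
  have "br k (ind t) + sW ?\<sigma> (br (ind t) k) \<in> R0 sV"
    using KI_Wdeg[OF k] by (intro R0_antisym_Wdeg ind_Wdeg) auto
  then have "br k (ind t) + sW ?\<sigma> (br (ind t) k) - sW ?\<sigma> (br (ind t) k) \<in> Trel sV act circ"
    by (intro comb_subspace_diff[OF comb_subspace_Trel] comb_subspace_sW[OF comb_subspace_Trel]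
        KI_br_left_Trel[OF k] Trel.rel) simp_all
  then show "br k (ind t) \<in> Trel sV act circ" by simp
qed simp_all

lemma Trel_ideal:
  assumes a: "a \<in> Trel sV act circ" and w: "w \<in> Wc"
  shows "br w a \<in> Trel sV act circ" and "br a w \<in> Trel sV act circ"
  using a
  by (induction rule: Trel.induct)
    (use w in \<open>auto intro: Trel.rel R0.ideal_left R0.ideal_right Trel.add Trel.scale
      KI_br_left_Trel KI_br_right_Trel\<close>)

lemma Trel_linear_image:
  assumes r: "r \<in> Trel sV act circ"
    and L_add: "\<And>f g. f \<in> Wc \<Longrightarrow> g \<in> Wc \<Longrightarrow> L (f + g) = L f + L g"
    and L_scale: "\<And>c f. f \<in> Wc \<Longrightarrow> L (sW c f) = sW c (L f)"
    and R0: "\<And>a. a \<in> R0 sV \<Longrightarrow> L a \<in> Trel sV act circ"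
    and KI: "\<And>i k. KI sV act circ i k \<Longrightarrow> L k \<in> Trel sV act circ"
  shows "L r \<in> Trel sV act circ"
  using r
proof (induction rule: Trel.induct)
  case (add a b)
  then show ?case using Trel_Wc[OF add(1)] Trel_Wc[OF add(2)] by (simp add: L_add Trel.add)
next
  case (scale a c)
  then show ?case using Trel_Wc[OF scale(1)] by (simp add: L_scale Trel.scale)
qed (use R0 KI in auto)

lemma actW_KI:
  assumes "KI sV act circ i k"
  shows "KI sV act circ i (actW act a k)"
  using assms
proof (induction rule: KI.induct)
  case (base w)
  then obtain S where S: "Ksub sV act circ S" "w \<in> S" by (auto simp: Krep_def)
  then have "actW act a w \<in> S" by (simp add: Ksub_def)
  then show ?case using S(1) by (auto simp: Krep_def intro!: KI.base)
next
  case (brk i j f k)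
  have "actW act a (br f k) = br (actW act a f) k + br f (actW act a k)"
    using KI_Wdeg[OF brk(5)] by (intro actW_br Wdeg_Wc[OF brk(4)]) (auto intro: Wdeg_Wc)
  then show ?case using brk by (simp add: KI.add KI.brk)
next
  case (add i x y)
  then show ?case using KI_Wdeg Wdeg_Wc by (metis KI.add actW_simps(1))
qed (simp_all add: KI.zero KI.scale)

lemma actW_Trel:
  fixes sV :: "'k::field \<Rightarrow> 'v::ab_group_add \<Rightarrow> 'v"
  assumes r: "r \<in> Trel sV act circ"
    and add: "\<And>x y. act a (x + y) = act a x + act a y"
    and scale: "\<And>c x. act a (sV c x) = sV c (act a x)"
  shows "actW act a r \<in> Trel sV act circ"
  by (rule Trel_linear_image[OF r]) (auto intro: Trel.rel Trel.kid actW_R0 actW_KI add scale)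

section \<open>The differential on representatives\<close>

lemma minus_one_power_pred: "1 \<le> n \<Longrightarrow> (-1::'k::ring_1) ^ (n - 1) = - ((-1) ^ n)"
  by (simp add: minus_one_power_iff)

lemma minus_one_power_pred_mult: "1 \<le> n \<Longrightarrow> (-1::'k::ring_1) ^ ((n - 1) * m) = (-1) ^ (n * m) * (-1) ^ m"
  by (simp add: minus_one_power_iff even_mult_iff)

definition leaf_action :: "('g \<Rightarrow> 'v \<Rightarrow> 'v) \<Rightarrow> ('v \<Rightarrow> 'g) \<Rightarrow> 'v ltree \<Rightarrow> 'v ltree \<Rightarrow> ('v ltree \<Rightarrow> 'k::field)" where
  "leaf_action act Th s t = (case s of Leaf u \<Rightarrow> actT act (Th u) t | Node _ _ \<Rightarrow> 0)"

fun dtree :: "('g \<Rightarrow> 'v \<Rightarrow> 'v) \<Rightarrow> ('v \<Rightarrow> 'g) \<Rightarrow> 'v ltree \<Rightarrow> ('v ltree \<Rightarrow> 'k::field)" where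
  "dtree act Th (Leaf u) = 0"
| "dtree act Th (Node s t) = leaf_action act Th s t + br (dtree act Th s) (ind t)
     + sW ((-1) ^ nleaves s) (br (ind s) (dtree act Th t) - leaf_action act Th t s)"

abbreviation dcomb :: "('g \<Rightarrow> 'v \<Rightarrow> 'v) \<Rightarrow> ('v \<Rightarrow> 'g) \<Rightarrow> ('v ltree \<Rightarrow> 'k::field) \<Rightarrow> ('v ltree \<Rightarrow> 'k)" where
  "dcomb act Th \<equiv> lin_ext (dtree act Th)"

lemma leaf_action_Leaf[simp]: "leaf_action act Th (Leaf u) t = actT act (Th u) t"
  and leaf_action_Node[simp]: "leaf_action act Th (Node s1 s2) t = 0"
  by (simp_all add: leaf_action_def)

lemma leaf_action_Wc[simp]: "leaf_action act Th s t \<in> Wc"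
  by (cases s) auto

lemma lin_ext_leaf_action_Leaf[simp]: "lin_ext (leaf_action act Th (Leaf u)) g = actW act (Th u) g"
  unfolding actW_lin_ext by (rule arg_cong[where f = "\<lambda>\<phi>. lin_ext \<phi> g"]) (rule ext, simp)

lemma lin_ext_leaf_action_Node[simp]: "lin_ext (leaf_action act Th (Node s1 s2)) g = 0"
  by (rule lin_ext_zero_on) simp

lemma lin_ext_leaf_action_Wdeg:
  "f \<in> Wdeg m \<Longrightarrow> 2 \<le> m \<Longrightarrow> lin_ext (\<lambda>s. leaf_action act Th s r) f = 0"
  by (rule lin_ext_Wdeg_Node_zero) simp_all

lemma dtree_Wc[simp]: "dtree act Th t \<in> Wc"
  by (induction t) auto

lemma dtree_Wdeg: "(dtree act Th t :: 'v ltree \<Rightarrow> 'k::field) \<in> Wdeg (nleaves t - 1)"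
proof (induction t)
  case (Node s t)
  let ?n = "nleaves s + nleaves t - 1"
  have "(leaf_action act Th s t :: 'v ltree \<Rightarrow> 'k) \<in> Wdeg ?n" by (cases s) auto
  moreover have "(leaf_action act Th t s :: 'v ltree \<Rightarrow> 'k) \<in> Wdeg ?n" by (cases t) auto
  moreover have "br (dtree act Th s) (ind t) \<in> (Wdeg ?n :: ('v ltree \<Rightarrow> 'k) set)"
    using br_Wdeg[OF Node(1) ind_Wdeg[OF refl], of t] nleaves_ge1[of s] by simp
  moreover have "br (ind s) (dtree act Th t) \<in> (Wdeg ?n :: ('v ltree \<Rightarrow> 'k) set)"
    using br_Wdeg[OF ind_Wdeg[OF refl] Node(2), of s] nleaves_ge1[of t] by simp
  ultimately show ?case by simp
qed simp

lemma dtree_nleaves_1: "nleaves t = 1 \<Longrightarrow> (dtree act Th t :: 'v ltree \<Rightarrow> 'k::field) = 0"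
  using dtree_Wdeg[of act Th t] Wdeg_0 by force

lemma dcomb_Wdeg: "x \<in> Wdeg m \<Longrightarrow> dcomb act Th x \<in> Wdeg (m - 1)"
  by (rule lin_ext_Wdeg) (auto intro: dtree_Wdeg[of act Th, simplified])

lemma dcomb_br_ind_left:
  assumes g: "g \<in> Wc"
  shows "dcomb act Th (br (ind s) g) = lin_ext (leaf_action act Th s) g + br (dtree act Th s) g
     + sW ((-1) ^ nleaves s) (br (ind s) (dcomb act Th g) - lin_ext (\<lambda>t. leaf_action act Th t s) g)"
  by (rule Wc_linear_eqI[OF _ _ _ _ _ g, where L = "\<lambda>g. dcomb act Th (br (ind s) g)"])
    (simp_all add: algebra_simps)

lemma dcomb_br_ind_right:
  assumes f: "f \<in> Wc"
  shows "dcomb act Th (br f (ind t)) = lin_ext (\<lambda>s. leaf_action act Th s t) f + br (dcomb act Th f) (ind t)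
     + br (parity_twist f) (dtree act Th t) - lin_ext (leaf_action act Th t) (parity_twist f)"
  by (rule Wc_linear_eqI[OF _ _ _ _ _ f, where L = "\<lambda>f. dcomb act Th (br f (ind t))"])
    (simp_all add: parity_twist_ind algebra_simps)

lemma dcomb_br_Leaf:
  assumes w: "w \<in> Wdeg i" and i: "2 \<le> i"
  shows "dcomb act Th (br (ind (Leaf x)) w) = actW act (Th x) w - br (ind (Leaf x)) (dcomb act Th w)"
  using dcomb_br_ind_left[OF Wdeg_Wc[OF w], of act Th "Leaf x"] lin_ext_leaf_action_Wdeg[OF w i]
  by (simp add: actW_lin_ext)

lemma dcomb_br_Wdeg:
  assumes x: "x \<in> Wdeg i" and y: "y \<in> Wdeg j" and i: "2 \<le> i" and j: "2 \<le> j"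
  shows "dcomb act Th (br x y) = br (dcomb act Th x) y + sW ((-1) ^ i) (br x (dcomb act Th y))"
  using x
proof (induction rule: Wdeg_induct)
  case (step c t g)
  obtain t1 t2 where t: "t = Node t1 t2" using step(1) i by (cases t) auto
  have "dcomb act Th (br (ind t) y) = br (dtree act Th t) y + sW ((-1) ^ i) (br (ind t) (dcomb act Th y))"
    using dcomb_br_ind_left[OF Wdeg_Wc[OF y], of act Th t] lin_ext_leaf_action_Wdeg[OF y j, where act = act and Th = Th] step(1)
    by (simp add: t del: dtree.simps)
  then show ?case using step Wdeg_Wc[OF y] Wdeg_Wc[OF step(2)] by (simp add: algebra_simps)
qed simp

lemma R0_antisym_dtree:
  "br (dtree act Th s) (ind t) + sW ((-1) ^ (nleaves s * nleaves t) * (-1) ^ nleaves t) (br (ind t) (dtree act Th s))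
     \<in> R0 sV"
proof (cases "nleaves s = 1")
  case True
  then show ?thesis by (simp add: dtree_nleaves_1 R0.zero)
next
  case False
  have "br (dtree act Th s) (ind t) + sW ((-1) ^ ((nleaves s - 1) * nleaves t)) (br (ind t) (dtree act Th s))
      \<in> R0 sV"
    by (rule R0_antisym_Wdeg[OF dtree_Wdeg ind_Wdeg[OF refl]])
  then show ?thesis by (simp only: minus_one_power_pred_mult[OF nleaves_ge1])
qed

lemma R0_antisym_dtree_Node:
  fixes sV :: "'k::field \<Rightarrow> 'v::ab_group_add \<Rightarrow> 'v"
  shows "dtree act Th (Node s t) + sW ((-1) ^ (nleaves s * nleaves t)) (dtree act Th (Node t s)) \<in> R0 sV"
proof -
  let ?\<sigma> = "(-1::'k) ^ (nleaves s * nleaves t)" and ?es = "(-1::'k) ^ nleaves s"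
    and ?et = "(-1::'k) ^ nleaves t"
  have B: "sW ?\<sigma> (br (dtree act Th t) (ind s)) + sW ?es (br (ind s) (dtree act Th t)) \<in> R0 sV"
    using R0.scale[OF R0_antisym_dtree[of act Th t s], of ?\<sigma>]
    by (simp add: mult.commute[of "nleaves t"] mult.assoc[symmetric])
  have leaves: "sW (1 - ?\<sigma> * ?et) (leaf_action act Th s t) + sW (?\<sigma> - ?es) (leaf_action act Th t s) = 0"
    by (cases s; cases t) auto
  have e: "dtree act Th (Node s t) + sW ?\<sigma> (dtree act Th (Node t s)) =
     (br (dtree act Th s) (ind t) + sW (?\<sigma> * ?et) (br (ind t) (dtree act Th s)))
     + (sW ?\<sigma> (br (dtree act Th t) (ind s)) + sW ?es (br (ind s) (dtree act Th t)))
     + (sW (1 - ?\<sigma> * ?et) (leaf_action act Th s t) + sW (?\<sigma> - ?es) (leaf_action act Th t s))"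
    by (simp add: algebra_simps sW_diff_left)
  show ?thesis unfolding e leaves by (simp add: R0.add R0_antisym_dtree B)
qed

lemma R0_jacobiator_dtree:
  fixes sV :: "'k::field \<Rightarrow> 'v::ab_group_add \<Rightarrow> 'v"
  shows "jacobiator ((-1) ^ (nleaves x * nleaves y) * (-1) ^ nleaves y) (dtree act Th x) (ind y) (ind z) \<in> R0 sV"
    and "jacobiator ((-1) ^ (nleaves x * nleaves y) * (-1) ^ nleaves x) (ind x) (dtree act Th y) (ind z) \<in> R0 sV"
    and "jacobiator ((-1) ^ (nleaves x * nleaves y)) (ind x) (ind y) (dtree act Th z) \<in> R0 sV"
proof -
  have "jacobiator ((-1) ^ ((nleaves x - 1) * nleaves y)) (dtree act Th x) (ind y) (ind z) \<in> R0 sV"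
    by (rule R0_jacobiator_Wdeg[OF dtree_Wdeg ind_Wdeg[OF refl] ind_Wdeg[OF refl]])
  then show "jacobiator ((-1) ^ (nleaves x * nleaves y) * (-1) ^ nleaves y) (dtree act Th x) (ind y) (ind z)
      \<in> R0 sV"
    by (simp only: minus_one_power_pred_mult[OF nleaves_ge1])
  have "jacobiator ((-1) ^ (nleaves x * (nleaves y - 1))) (ind x) (dtree act Th y) (ind z) \<in> R0 sV"
    by (rule R0_jacobiator_Wdeg[OF ind_Wdeg[OF refl] dtree_Wdeg ind_Wdeg[OF refl]])
  then show "jacobiator ((-1) ^ (nleaves x * nleaves y) * (-1) ^ nleaves x) (ind x) (dtree act Th y) (ind z)
      \<in> R0 sV"
    by (simp only: mult.commute[of "nleaves x"] minus_one_power_pred_mult[OF nleaves_ge1])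
  show "jacobiator ((-1) ^ (nleaves x * nleaves y)) (ind x) (ind y) (dtree act Th z) \<in> R0 sV"
    by (rule R0_jacobiator_Wdeg[OF ind_Wdeg[OF refl] ind_Wdeg[OF refl] dtree_Wdeg])
qed

lemma dcomb_jacobiator_R0:
  fixes sV :: "'k::field \<Rightarrow> 'v::ab_group_add \<Rightarrow> 'v"
  shows "dcomb act Th (jacobiator ((-1) ^ (nleaves x * nleaves y)) (ind x) (ind y) (ind z)) \<in> R0 sV"
proof -
  let ?D = "dtree act Th" and ?A = "leaf_action act Th :: 'v ltree \<Rightarrow> 'v ltree \<Rightarrow> 'v ltree \<Rightarrow> 'k"
  let ?\<sigma> = "(-1::'k) ^ (nleaves x * nleaves y)"
  let ?ex = "(-1::'k) ^ nleaves x" and ?ey = "(-1::'k) ^ nleaves y"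
  define X where "X = ?A x (Node y z) - br (?A x y) (ind z) - sW (?\<sigma> * ?ey) (br (ind y) (?A x z))"
  define Y where "Y = sW ?ex (br (ind x) (?A y z)) + sW ?ex (br (?A y x) (ind z)) - sW ?\<sigma> (?A y (Node x z))"
  define Z where "Z = sW (?ex * ?ey) (?A z (Node x y)) - sW (?ex * ?ey) (br (ind x) (?A z y))
     + sW (?\<sigma> * ?ex * ?ey) (br (ind y) (?A z x))"
  have e: "dcomb act Th (jacobiator ?\<sigma> (ind x) (ind y) (ind z))
      = jacobiator (?\<sigma> * ?ey) (?D x) (ind y) (ind z) + sW ?ex (jacobiator (?\<sigma> * ?ex) (ind x) (?D y) (ind z))
      + sW (?ex * ?ey) (jacobiator ?\<sigma> (ind x) (ind y) (?D z)) + X + Y + Z"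
    unfolding X_def Y_def Z_def by (simp add: jacobiator_def algebra_simps power_add)
  have "X = 0"
    by (cases x) (auto simp: X_def)
  moreover have "Y = 0"
    by (cases y) (auto simp: Y_def algebra_simps)
  moreover have "Z \<in> R0 sV"
  proof (cases z)
    case (Leaf w)
    have "br (actT act (Th w) x) (ind y) + sW ?\<sigma> (br (ind y) (actT act (Th w) x)) \<in> R0 sV"
      by (rule R0_antisym_Wdeg[OF actT_Wdeg ind_Wdeg[OF refl]])
    from R0.scale[OF this, of "?ex * ?ey"] show ?thesis
      by (simp add: Z_def Leaf algebra_simps)
  qed (simp add: Z_def R0.zero)
  ultimately show ?thesis
    unfolding e by (simp add: R0.add R0.scale R0_jacobiator_dtree)
qed

section \<open>The quotient \<open>T\<close>\<close>

locale lie_leibniz_data =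
  fixes sV :: "'k::field \<Rightarrow> 'v::ab_group_add \<Rightarrow> 'v"
    and act :: "'g \<Rightarrow> 'v \<Rightarrow> 'v"
    and circ :: "'v \<Rightarrow> 'v \<Rightarrow> 'v"
    and Theta :: "'v \<Rightarrow> 'g"
begin

abbreviation R where "R \<equiv> Trel sV act circ"

lemma qt_self: "x \<in> Wc \<Longrightarrow> x \<in> qt R x"
  by (simp add: qt_def comb_subspace_0[OF comb_subspace_Trel])

lemma rep_qt: "x \<in> Wc \<Longrightarrow> rep (qt R x) \<in> Wc \<and> rep (qt R x) - x \<in> R"
  using someI[of "\<lambda>w. w \<in> qt R x", OF qt_self] by (simp add: rep_def qt_def)

lemma qt_eq: "x - y \<in> R \<Longrightarrow> qt R x = qt R y"
proof -
  assume d: "x - y \<in> R"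
  have "w - x \<in> R \<longleftrightarrow> w - y \<in> R" for w
    using comb_subspace_add[OF comb_subspace_Trel _ d, of "w - x"]
      comb_subspace_diff[OF comb_subspace_Trel _ d, of "w - y"] by auto
  then show ?thesis by (auto simp: qt_def)
qed

lemma qt_rep_linear:
  assumes L_diff: "\<And>f g. f \<in> Wc \<Longrightarrow> g \<in> Wc \<Longrightarrow> L (f - g) = L f - L g"
    and L_R: "\<And>r. r \<in> R \<Longrightarrow> L r \<in> R" and x: "x \<in> Wc"
  shows "qt R (L (rep (qt R x))) = qt R (L x)"
  using rep_qt[OF x] by (intro qt_eq) (simp add: L_R flip: L_diff[OF _ x])

lemma tadd_qt: "x \<in> Wc \<Longrightarrow> y \<in> Wc \<Longrightarrow> tadd R (qt R x) (qt R y) = qt R (x + y)"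
  unfolding tadd_def
proof (rule qt_eq)
  assume x: "x \<in> Wc" and y: "y \<in> Wc"
  have e: "rep (qt R x) + rep (qt R y) - (x + y) = (rep (qt R x) - x) + (rep (qt R y) - y)" by simp
  show "rep (qt R x) + rep (qt R y) - (x + y) \<in> R"
    unfolding e using rep_qt[OF x] rep_qt[OF y] by (simp add: comb_subspace_add[OF comb_subspace_Trel])
qed

lemma tsub_qt: "x \<in> Wc \<Longrightarrow> y \<in> Wc \<Longrightarrow> tsub R (qt R x) (qt R y) = qt R (x - y)"
  unfolding tsub_def
proof (rule qt_eq)
  assume x: "x \<in> Wc" and y: "y \<in> Wc"
  have e: "rep (qt R x) - rep (qt R y) - (x - y) = (rep (qt R x) - x) - (rep (qt R y) - y)" by simp
  show "rep (qt R x) - rep (qt R y) - (x - y) \<in> R"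
    unfolding e using rep_qt[OF x] rep_qt[OF y] by (simp add: comb_subspace_diff[OF comb_subspace_Trel])
qed

lemma tsc_qt: "x \<in> Wc \<Longrightarrow> tsc R c (qt R x) = qt R (sW c x)"
  unfolding tsc_def by (rule qt_rep_linear) (simp_all add: comb_subspace_sW[OF comb_subspace_Trel])

lemma tbr_qt: "x \<in> Wc \<Longrightarrow> y \<in> Wc \<Longrightarrow> tbr R (qt R x) (qt R y) = qt R (br x y)"
  unfolding tbr_def
proof (rule qt_eq)
  assume x: "x \<in> Wc" and y: "y \<in> Wc"
  have "br (rep (qt R x)) (rep (qt R y)) - br x y
      = br (rep (qt R x) - x) (rep (qt R y)) + br x (rep (qt R y) - y)"
    by (simp add: algebra_simps)
  also have "\<dots> \<in> R"
    using rep_qt[OF x] rep_qt[OF y] x by (intro comb_subspace_add[OF comb_subspace_Trel] Trel_ideal) auto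
  finally show "br (rep (qt R x)) (rep (qt R y)) - br x y \<in> R" .
qed

lemma iota_qt: "iota R x = qt R (ind (Leaf x))"
  by (simp add: iota_def)

lemma tzero_eq: "tzero R = qt R 0"
  by (simp add: tzero_def)

lemma Tdeg_E: "X \<in> Tdeg R i \<Longrightarrow> (\<And>x. x \<in> Wdeg i \<Longrightarrow> X = qt R x \<Longrightarrow> P) \<Longrightarrow> P"
  by (auto simp: Tdeg_def)

lemma Tdeg_I: "x \<in> Wdeg i \<Longrightarrow> qt R x \<in> Tdeg R i"
  by (simp add: Tdeg_def)

end

section \<open>The differential of a Lie-Leibniz triple\<close>

locale lie_leibniz_setting = lie_leibniz_data sV act circ Theta
  for sV :: "'k::field_char_0 \<Rightarrow> 'v::ab_group_add \<Rightarrow> 'v"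
    and act :: "'g::ab_group_add \<Rightarrow> 'v \<Rightarrow> 'v"
    and circ Theta +
  fixes sG :: "'k \<Rightarrow> 'g \<Rightarrow> 'g"
    and brg :: "'g \<Rightarrow> 'g \<Rightarrow> 'g"
  assumes llt: "lie_leibniz_triple sG brg sV act circ Theta"

sublocale lie_leibniz_setting \<subseteq> V: vector_space sV
  using llt by (simp add: lie_leibniz_triple_def lie_module_def)

context lie_leibniz_setting
begin

abbreviation D where "D \<equiv> dtree act Theta"
abbreviation Dw where "Dw \<equiv> dcomb act Theta"
abbreviation A :: "'v ltree \<Rightarrow> 'v ltree \<Rightarrow> 'v ltree \<Rightarrow> 'k" where "A \<equiv> leaf_action act Theta"

lemma act_add: "act a (x + y) = act a x + act a y"
  and act_scale: "act a (sV c x) = sV c (act a x)"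
  and act_add_left: "act (a + b) x = act a x + act b x"
  and act_scale_left: "act (sG c a) x = sV c (act a x)"
  and act_brg: "act (brg a b) x = act a (act b x) - act b (act a x)"
  using llt by (auto simp: lie_leibniz_triple_def lie_module_def Vector_Spaces.linear_iff)

lemma act_zero_left: "act 0 x = 0"
  using act_add_left[of 0 0 x] by simp

lemma Theta_add: "Theta (x + y) = Theta x + Theta y"
  and Theta_scale: "Theta (sV c x) = sG c (Theta x)"
  and circ_eq_act: "circ x y = act (Theta x) y"
  and Theta_circ: "Theta (circ x y) = brg (Theta x) (Theta y)"
  using llt by (auto simp: lie_leibniz_triple_def Vector_Spaces.linear_iff)

lemma Theta_act: "Theta (act (Theta w) u) = brg (Theta w) (Theta u)"
  using Theta_circ[of w u] by (simp add: circ_eq_act)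

lemma brg_add_left: "brg (a + b) c = brg a c + brg b c"
  and brg_add_right: "brg c (a + b) = brg c a + brg c b"
  and brg_self: "brg a a = 0"
  using llt by (auto simp: lie_leibniz_triple_def lie_algebra_def Vector_Spaces.linear_iff)

lemma brg_anticomm: "brg a b + brg b a = 0"
proof -
  have "brg (a + b) (a + b) = brg a a + brg a b + (brg b a + brg b b)"
    by (simp add: brg_add_left brg_add_right add.assoc)
  then show ?thesis by (simp add: brg_self)
qed

lemma anticomm_double: "sV 2 (anticomm sV circ x y) = circ x y + circ y x"
  by (simp add: anticomm_def)

lemma ind_Leaf_zero_R0: "ind (Leaf 0) \<in> R0 sV"
  using R0.lin_scale[where sV = sV and c = 0 and x = 0] by simp

lemma ind_Leaf_add_R0: "ind (Leaf (x + y)) - (ind (Leaf x) + ind (Leaf y)) \<in> R0 sV"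
  using R0.lin_add[where sV = sV and x = x and y = y] by (simp add: diff_diff_eq)

lemma ind_Leaf_sum_R0:
  "(\<Sum>a\<in>B. sW (c a) (ind (Leaf (\<phi> a)))) - ind (Leaf (\<Sum>a\<in>B. sV (c a) (\<phi> a))) \<in> R0 sV"
proof (induction B rule: infinite_finite_induct)
  case (insert a B)
  let ?S = "\<Sum>a\<in>B. sW (c a) (ind (Leaf (\<phi> a)))" and ?T = "\<Sum>a\<in>B. sV (c a) (\<phi> a)"
  have "(\<Sum>a\<in>insert a B. sW (c a) (ind (Leaf (\<phi> a)))) - ind (Leaf (\<Sum>a\<in>insert a B. sV (c a) (\<phi> a)))
    = (?S - ind (Leaf ?T)) - (ind (Leaf (sV (c a) (\<phi> a))) - sW (c a) (ind (Leaf (\<phi> a))))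
      - (ind (Leaf (sV (c a) (\<phi> a) + ?T)) - (ind (Leaf (sV (c a) (\<phi> a))) + ind (Leaf ?T)))"
    using insert by (simp add: algebra_simps)
  also have "\<dots> \<in> R0 sV"
    by (intro comb_subspace_diff[OF comb_subspace_R0] insert R0.lin_scale ind_Leaf_add_R0)
  finally show ?case .
qed (use ind_Leaf_zero_R0 comb_subspace_uminus[OF comb_subspace_R0] in simp_all)

lemma actT_add_R0: "actT act (a + b) t - (actT act a t + actT act b t) \<in> R0 sV"
proof (induction t)
  case (Node s t)
  have e: "actT act (a + b) (Node s t) - (actT act a (Node s t) + actT act b (Node s t))
    = br (actT act (a + b) s - (actT act a s + actT act b s)) (ind t)
      + br (ind s) (actT act (a + b) t - (actT act a t + actT act b t))"
    by (simp add: algebra_simps)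
  show ?case unfolding e by (intro R0.add R0.ideal_left R0.ideal_right Node) simp_all
qed (simp add: act_add_left ind_Leaf_add_R0)

lemma actT_scale_R0: "actT act (sG c a) t - sW c (actT act a t) \<in> R0 sV"
proof (induction t)
  case (Node s t)
  have e: "actT act (sG c a) (Node s t) - sW c (actT act a (Node s t))
    = br (actT act (sG c a) s - sW c (actT act a s)) (ind t)
      + br (ind s) (actT act (sG c a) t - sW c (actT act a t))"
    by (simp add: algebra_simps)
  show ?case unfolding e by (intro R0.add R0.ideal_left R0.ideal_right Node) simp_all
qed (simp add: act_scale_left R0.lin_scale)

lemma actT_zero_R0: "actT act 0 t \<in> R0 sV"
  by (induction t) (simp_all add: act_zero_left ind_Leaf_zero_R0 R0.add R0.ideal_left R0.ideal_right)

lemma actT_brg_R0: "actT act (brg a b) t - (actW act a (actT act b t) - actW act b (actT act a t)) \<in> R0 sV"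
proof (induction t)
  case (Leaf x)
  have "- (ind (Leaf (act a (act b x) - act b (act a x) + act b (act a x)))
      - (ind (Leaf (act a (act b x) - act b (act a x))) + ind (Leaf (act b (act a x))))) \<in> R0 sV"
    by (rule comb_subspace_uminus[OF comb_subspace_R0 ind_Leaf_add_R0])
  then show ?case by (simp add: act_brg algebra_simps)
next
  case (Node s t)
  have e: "actT act (brg a b) (Node s t) - (actW act a (actT act b (Node s t)) - actW act b (actT act a (Node s t)))
    = br (actT act (brg a b) s - (actW act a (actT act b s) - actW act b (actT act a s))) (ind t)
      + br (ind s) (actT act (brg a b) t - (actW act a (actT act b t) - actW act b (actT act a t)))"
    by (simp add: actW_br algebra_simps)
  show ?case unfolding e by (intro R0.add R0.ideal_left R0.ideal_right Node) simp_all
qed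

lemma actW_preserves_R0: "r \<in> R0 sV \<Longrightarrow> actW act a r \<in> R0 sV"
  by (rule actW_R0) (simp_all add: act_add act_scale)

lemma actW_preserves_Trel: "r \<in> R \<Longrightarrow> actW act a r \<in> R"
  by (rule actW_Trel) (simp_all add: act_add act_scale)

lemma lin_ext_leaf_action_R0: "r \<in> R0 sV \<Longrightarrow> lin_ext (A s) r \<in> R0 sV"
  by (cases s) (simp_all add: actW_preserves_R0 R0.zero)

lemma lin_ext_leaf_action_left_R0:
  assumes r: "r \<in> R0 sV"
  shows "lin_ext (\<lambda>s. A s t) r \<in> R0 sV"
proof (rule R0_linear_image[OF r comb_subspace_R0])
  fix x y c
  show "lin_ext (\<lambda>s. A s t) (ind (Leaf (x + y)) - ind (Leaf x) - ind (Leaf y)) \<in> R0 sV"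
    using actT_add_R0 by (simp add: Theta_add diff_diff_eq)
  show "lin_ext (\<lambda>s. A s t) (ind (Leaf (sV c x)) - sW c (ind (Leaf x))) \<in> R0 sV"
    using actT_scale_R0 by (simp add: Theta_scale)
qed (simp_all add: jacobiator_def lin_ext_br_Node_zero R0.zero del: br_ind_ind)

lemma dcomb_R0:
  assumes r: "r \<in> R0 sV"
  shows "Dw r \<in> R0 sV"
proof (rule R0_linear_image[OF r comb_subspace_R0])
  fix s t
  show "Dw (ind (Node s t) + sW ((-1) ^ (nleaves s * nleaves t)) (ind (Node t s))) \<in> R0 sV"
    using R0_antisym_dtree_Node by (simp del: dtree.simps)
next
  fix x y z
  show "Dw (jacobiator ((-1) ^ (nleaves x * nleaves y)) (ind x) (ind y) (ind z)) \<in> R0 sV"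
    by (rule dcomb_jacobiator_R0)
next
  fix a s assume a: "a \<in> R0 sV" "Dw a \<in> R0 sV"
  show "Dw (br (ind s) a) \<in> R0 sV"
    unfolding dcomb_br_ind_left[OF R0_Wc[OF a(1)]]
    by (intro R0.add R0.scale comb_subspace_diff[OF comb_subspace_R0] lin_ext_leaf_action_R0
        lin_ext_leaf_action_left_R0 a R0.ideal_left) simp_all
next
  fix a t assume a: "a \<in> R0 sV" "Dw a \<in> R0 sV"
  show "Dw (br a (ind t)) \<in> R0 sV"
    unfolding dcomb_br_ind_right[OF R0_Wc[OF a(1)]]
    by (intro R0.add comb_subspace_diff[OF comb_subspace_R0] lin_ext_leaf_action_left_R0
        lin_ext_leaf_action_R0 parity_twist_R0 a R0.ideal_right R0.ideal_left) simp_all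
qed (simp_all add: R0.zero)

text \<open>On \<open>F\<^sub>-\<^sub>2\<close> the differential is \<open>[u, v] \<mapsto> \<Theta>(u)\<cdot>v + \<Theta>(v)\<cdot>u = 2{u, v}\<close>, which vanishes on \<open>K\<close>
  modulo the multilinearity relations.\<close>

lemma dcomb_Krep:
  assumes w: "w \<in> Krep sV act circ"
  shows "Dw w \<in> R0 sV"
proof -
  obtain S where S: "Ksub sV act circ S" "w \<in> S" using w by (auto simp: Krep_def)
  have w2: "w \<in> Wdeg 2" and sym: "sym2 sV circ w = 0" using S by (auto simp: Ksub_def)
  let ?\<psi> = "\<lambda>t. ind (Leaf (sV 2 (symb sV circ t))) :: 'v ltree \<Rightarrow> 'k"
  have "lin_ext (\<lambda>t. D t - ?\<psi> t) w \<in> R0 sV"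
  proof (rule lin_ext_into_subspace[OF comb_subspace_R0])
    fix t assume "t \<in> supp w"
    then have "nleaves t = 2" using w2 by (simp add: supp_def Wdeg_def)
    then obtain x y where t: "t = Node (Leaf x) (Leaf y)" using nleaves_eq_2 by blast
    have "D t - ?\<psi> t = - (ind (Leaf (act (Theta x) y + act (Theta y) x))
        - (ind (Leaf (act (Theta x) y)) + ind (Leaf (act (Theta y) x))))"
      by (simp add: t symb_def anticomm_double circ_eq_act)
    then show "D t - ?\<psi> t \<in> R0 sV"
      using comb_subspace_uminus[OF comb_subspace_R0 ind_Leaf_add_R0] by simp
  qed
  moreover have "lin_ext ?\<psi> w \<in> R0 sV"
  proof -
    have "(\<Sum>t\<in>supp w. sV (w t) (sV 2 (symb sV circ t))) = sV 2 (sym2 sV circ w)"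
      by (simp add: sym2_def V.scale_sum_right mult.commute)
    then have "lin_ext ?\<psi> w - ind (Leaf 0) \<in> R0 sV"
      using ind_Leaf_sum_R0[of "\<lambda>t. w t" "\<lambda>t. sV 2 (symb sV circ t)" "supp w"]
      by (simp add: sym lin_ext_def)
    then show ?thesis using comb_subspace_add[OF comb_subspace_R0 _ ind_Leaf_zero_R0] by fastforce
  qed
  moreover have "Dw w = lin_ext (\<lambda>t. D t - ?\<psi> t) w + lin_ext ?\<psi> w"
    by (simp add: lin_ext_fun_diff)
  ultimately show ?thesis by (simp add: R0.add)
qed

lemma dcomb_KI: "KI sV act circ i k \<Longrightarrow> Dw k \<in> R"
proof (induction rule: KI.induct)
  case (base w)
  then show ?case using dcomb_Krep by (blast intro: Trel.rel)
next
  case (brk i j f k)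
  have kR: "k \<in> R" using brk(5) by (rule Trel.kid)
  have kW: "k \<in> Wc" and k2: "k \<in> Wdeg (i - j)" "2 \<le> i - j"
    using KI_Wdeg[OF brk(5)] Wdeg_Wc by auto
  have "Dw (br (ind s) k) \<in> R" for s
  proof -
    have "lin_ext (A s) k \<in> R"
      by (cases s) (simp_all add: actW_preserves_Trel kR comb_subspace_0[OF comb_subspace_Trel])
    then show ?thesis
      unfolding dcomb_br_ind_left[OF kW] lin_ext_leaf_action_Wdeg[OF k2]
      by (intro comb_subspace_add[OF comb_subspace_Trel] comb_subspace_sW[OF comb_subspace_Trel]
          comb_subspace_diff[OF comb_subspace_Trel] Trel_ideal(1) kR brk(6)
          comb_subspace_0[OF comb_subspace_Trel]) simp_all
  qed
  then show ?case
    by (intro Wc_linear_into_subspace[OF comb_subspace_Trel _ _ _ Wdeg_Wc[OF brk(4)],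
          where L = "\<lambda>f. Dw (br f k)"]) (simp_all add: kW)
next
  case (add i a b)
  then show ?case using Wdeg_Wc[of a i] Wdeg_Wc[of b i] by (simp add: KI_Wdeg Trel.add)
qed (simp_all add: comb_subspace_0[OF comb_subspace_Trel] Trel.scale)

lemma dcomb_Trel: "r \<in> R \<Longrightarrow> Dw r \<in> R"
  by (erule Trel_linear_image) (simp_all add: Trel.rel dcomb_R0 dcomb_KI)

lemma lin_ext_leaf_action_actT_Node: "lin_ext (\<lambda>s'. A s' t) (actT act a (Node s1 s2)) = 0"
  by (rule lin_ext_leaf_action_Wdeg[OF actT_Wdeg nleaves_Node_ge2])

text \<open>Only elements \<open>a = \<Theta>(w)\<close> are admissible: the leaf terms produce \<open>\<Theta>(a\<cdot>u)\<close>, which must be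
  rewritten as \<open>[a, \<Theta>(u)]\<close>.\<close>

lemma dtree_equivariant_R0:
  assumes a: "a = Theta w"
  shows "Dw (actT act a t) - actW act a (D t) \<in> R0 sV"
proof (induction t)
  case (Node s t)
  let ?es = "(-1::'k) ^ nleaves s" and ?T = "actT act a :: 'v ltree \<Rightarrow> 'v ltree \<Rightarrow> 'k"
  define Xs where "Xs = lin_ext (\<lambda>s'. A s' t) (?T s) + lin_ext (A s) (?T t) - actW act a (A s t)"
  define Xt where "Xt = actW act a (A t s) - lin_ext (A t) (?T s) - lin_ext (\<lambda>t'. A t' s) (?T t)"
  have e: "Dw (actT act a (Node s t)) - actW act a (D (Node s t))
     = br (Dw (?T s) - actW act a (D s)) (ind t) + sW ?es (br (ind s) (Dw (?T t) - actW act a (D t)))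
       + Xs + sW ?es Xt"
    unfolding Xs_def Xt_def
    by (simp add: dcomb_br_ind_left dcomb_br_ind_right parity_twist_Wdeg[OF actT_Wdeg] actW_br
        algebra_simps del: dtree.simps) (simp add: actW_br algebra_simps)
  have "Xs \<in> R0 sV"
  proof (cases s)
    case (Leaf u)
    then have "Xs = actT act (brg a (Theta u)) t
        - (actW act a (actT act (Theta u) t) - actW act (Theta u) (actT act a t))"
      by (simp add: Xs_def a Theta_act)
    then show ?thesis using actT_brg_R0 by simp
  qed (simp add: Xs_def lin_ext_leaf_action_actT_Node R0.zero del: actT.simps)
  moreover have "Xt \<in> R0 sV"
  proof (cases t)
    case (Leaf v)
    then show ?thesis
      using comb_subspace_uminus[OF comb_subspace_R0 actT_brg_R0[of a "Theta v" s]]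
      by (simp add: Xt_def a Theta_act algebra_simps)
  qed (simp add: Xt_def lin_ext_leaf_action_actT_Node R0.zero del: actT.simps)
  ultimately show ?case
    unfolding e by (intro R0.add R0.scale R0.ideal_left R0.ideal_right Node) simp_all
qed (simp add: R0.zero)

lemma dcomb_equivariant_R0:
  assumes a: "a = Theta w" and f: "f \<in> Wc"
  shows "Dw (actW act a f) - actW act a (Dw f) \<in> R0 sV"
  by (rule Wc_linear_into_subspace[OF comb_subspace_R0 _ _ _ f,
        where L = "\<lambda>f. Dw (actW act a f) - actW act a (Dw f)"])
    (simp_all add: algebra_simps dtree_equivariant_R0[OF a])

text \<open>The leaf terms of \<open>\<partial>\<^sup>2\<close> on \<open>[u, v]\<close> give the action of \<open>\<Theta>(u\<circ>v + v\<circ>u) = [\<Theta> u, \<Theta> v] + [\<Theta> v, \<Theta> u] = 0\<close>.\<close>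

lemma lin_ext_leaf_action_dtree_R0: "lin_ext (\<lambda>s'. A s' r) (D s) \<in> R0 sV"
proof -
  consider "nleaves s = 1" | "nleaves s = 2" | "3 \<le> nleaves s" using nleaves_ge1[of s] by linarith
  then show ?thesis
  proof cases
    case 1
    then show ?thesis by (simp add: dtree_nleaves_1 R0.zero)
  next
    case 2
    then obtain x y where s: "s = Node (Leaf x) (Leaf y)" using nleaves_eq_2 by blast
    let ?X = "Theta x" and ?Y = "Theta y"
    have "lin_ext (\<lambda>s'. A s' r) (D s) = - (actT act (brg ?X ?Y + brg ?Y ?X) r
         - (actT act (brg ?X ?Y) r + actT act (brg ?Y ?X) r)) + actT act (brg ?X ?Y + brg ?Y ?X) r"
      by (simp add: s Theta_act)
    also have "\<dots> \<in> R0 sV"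
      using actT_zero_R0 by (intro R0.add comb_subspace_uminus[OF comb_subspace_R0] actT_add_R0)
        (simp add: brg_anticomm)
    finally show ?thesis .
  next
    case 3
    then show ?thesis by (simp add: lin_ext_leaf_action_Wdeg[OF dtree_Wdeg] R0.zero)
  qed
qed

lemma dcomb_dtree_R0: "Dw (D t) \<in> R0 sV"
proof (induction t)
  case (Node s t)
  let ?es = "(-1::'k) ^ nleaves s"
  have tw: "parity_twist (D s) = sW (- ?es) (D s)"
    using parity_twist_Wdeg[OF dtree_Wdeg] minus_one_power_pred[OF nleaves_ge1] by metis
  define Qs where "Qs = Dw (A s t) + sW ?es (lin_ext (A s) (D t))"
  define Qt where "Qt = sW ?es (lin_ext (A t) (D s)) - sW ?es (Dw (A t s))"
  define Ws where "Ws = lin_ext (\<lambda>s'. A s' t) (D s)"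
  define Wt where "Wt = - lin_ext (\<lambda>t'. A t' s) (D t)"
  have e: "Dw (D (Node s t)) = br (Dw (D s)) (ind t) + br (ind s) (Dw (D t)) + Qs + Qt + Ws + Wt"
    unfolding Qs_def Qt_def Ws_def Wt_def dtree.simps(2)
    by (simp add: dcomb_br_ind_left dcomb_br_ind_right tw sW_neg algebra_simps del: dtree.simps)
  have "Qs \<in> R0 sV"
  proof (cases s)
    case (Leaf u)
    then show ?thesis
      using dcomb_equivariant_R0[OF refl, of "ind t" u] by (simp add: Qs_def actW_lin_ext del: dtree.simps)
  qed (simp add: Qs_def R0.zero del: dtree.simps)
  moreover have "Qt \<in> R0 sV"
  proof (cases t)
    case (Leaf v)
    then show ?thesis
      using comb_subspace_uminus[OF comb_subspace_R0 R0.scale[OF dcomb_equivariant_R0[OF refl, of "ind s" v]]]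
      by (simp add: Qt_def actW_lin_ext algebra_simps del: dtree.simps)
  qed (simp add: Qt_def R0.zero del: dtree.simps)
  moreover have "Ws \<in> R0 sV" and "Wt \<in> R0 sV"
    unfolding Ws_def Wt_def
    by (intro comb_subspace_uminus[OF comb_subspace_R0] lin_ext_leaf_action_dtree_R0)+
  ultimately show ?case
    unfolding e using Node by (simp add: R0.add R0.ideal_left R0.ideal_right)
qed (simp add: R0.zero)

lemma dcomb_dcomb_R0: "f \<in> Wc \<Longrightarrow> Dw (Dw f) \<in> R0 sV"
  by (simp add: lin_ext_comp) (rule lin_ext_into_subspace[OF comb_subspace_R0 dcomb_dtree_R0])

lemma tact_qt: "x \<in> Wc \<Longrightarrow> tact act R a (qt R x) = qt R (actW act a x)"
  unfolding tact_def by (rule qt_rep_linear) (simp_all add: actW_preserves_Trel)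

text \<open>The degree argument is ignored: one map on representatives serves all degrees.\<close>

definition dquot :: "nat \<Rightarrow> ('v ltree \<Rightarrow> 'k) set \<Rightarrow> ('v ltree \<Rightarrow> 'k) set" where
  "dquot i X = qt R (Dw (rep X))"

lemma dquot_qt: "x \<in> Wc \<Longrightarrow> dquot i (qt R x) = qt R (Dw x)"
  unfolding dquot_def by (rule qt_rep_linear) (simp_all add: dcomb_Trel)

lemma dquot_Tdeg: "X \<in> Tdeg R (Suc i) \<Longrightarrow> dquot i X \<in> Tdeg R i"
  by (erule Tdeg_E) (simp add: dquot_qt Wdeg_Wc Tdeg_I dcomb_Wdeg[of _ "Suc i", simplified])

lemma dquot_tadd:
  "X \<in> Tdeg R (Suc i) \<Longrightarrow> Y \<in> Tdeg R (Suc i) \<Longrightarrow> dquot i (tadd R X Y) = tadd R (dquot i X) (dquot i Y)"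
  by (erule Tdeg_E)+ (simp add: dquot_qt tadd_qt Wdeg_Wc)

lemma dquot_tsc: "X \<in> Tdeg R (Suc i) \<Longrightarrow> dquot i (tsc R c X) = tsc R c (dquot i X)"
  by (erule Tdeg_E) (simp add: dquot_qt tsc_qt Wdeg_Wc)

lemma dquot_tact:
  assumes a: "a \<in> range Theta" and X: "X \<in> Tdeg R (Suc i)"
  shows "dquot i (tact act R a X) = tact act R a (dquot i X)"
proof -
  obtain w where w: "a = Theta w" using a by auto
  obtain x where x: "x \<in> Wdeg (Suc i)" and X: "X = qt R x" using X by (rule Tdeg_E)
  from Wdeg_Wc[OF x] show ?thesis
    unfolding X by (simp add: dquot_qt tact_qt) (rule qt_eq[OF Trel.rel[OF dcomb_equivariant_R0[OF w]]])
qed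

lemma dquot_iota_iota: "dquot 1 (tbr R (iota R x) (iota R y)) = iota R (sV 2 (anticomm sV circ x y))"
proof -
  have "dquot 1 (tbr R (iota R x) (iota R y))
      = qt R (ind (Leaf (act (Theta x) y)) + ind (Leaf (act (Theta y) x)))"
    by (simp add: iota_qt tbr_qt dquot_qt)
  also have "\<dots> = qt R (ind (Leaf (act (Theta x) y + act (Theta y) x)))"
    by (rule qt_eq[OF Trel.rel]) (use comb_subspace_uminus[OF comb_subspace_R0 ind_Leaf_add_R0] in simp)
  finally show ?thesis by (simp add: iota_qt anticomm_double circ_eq_act)
qed

lemma dquot_iota_tbr:
  assumes i: "2 \<le> i" and X: "X \<in> Tdeg R i"
  shows "dquot i (tbr R (iota R x) X) = tsub R (tact act R (Theta x) X) (tbr R (iota R x) (dquot (i - 1) X))"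
proof -
  obtain w where w: "w \<in> Wdeg i" and X: "X = qt R w" using X by (rule Tdeg_E)
  show ?thesis
    unfolding X using Wdeg_Wc[OF w]
    by (simp add: iota_qt tbr_qt dquot_qt tact_qt tsub_qt dcomb_br_Leaf[OF w i])
qed

lemma dquot_tbr:
  assumes i: "2 \<le> i" and j: "2 \<le> j" and X: "X \<in> Tdeg R i" and Y: "Y \<in> Tdeg R j"
  shows "dquot (i + j - 1) (tbr R X Y)
    = tadd R (tbr R (dquot (i - 1) X) Y) (tsc R ((-1) ^ i) (tbr R X (dquot (j - 1) Y)))"
proof -
  obtain x where x: "x \<in> Wdeg i" and X: "X = qt R x" using X by (rule Tdeg_E)
  obtain y where y: "y \<in> Wdeg j" and Y: "Y = qt R y" using Y by (rule Tdeg_E)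
  show ?thesis
    unfolding X Y using Wdeg_Wc[OF x] Wdeg_Wc[OF y]
    by (simp add: tbr_qt dquot_qt tsc_qt tadd_qt dcomb_br_Wdeg[OF x y i j])
qed

lemma dquot_is_dfamily: "is_dfamily sV act circ Theta dquot"
  unfolding is_dfamily_def Let_def
  by (intro conjI allI impI ballI dquot_Tdeg dquot_tadd dquot_tsc dquot_tact dquot_iota_iota
      dquot_iota_tbr dquot_tbr) auto

lemma dquot_dquot:
  assumes X: "X \<in> Tdeg R (i + 2)"
  shows "dquot i (dquot (Suc i) X) = tzero R"
proof -
  obtain x where x: "x \<in> Wdeg (i + 2)" and X: "X = qt R x" using X by (rule Tdeg_E)
  have "Dw (Dw x) - 0 \<in> R" using Trel.rel[OF dcomb_dcomb_R0[OF Wdeg_Wc[OF x]]] by simp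
  then show ?thesis unfolding X tzero_eq using Wdeg_Wc[OF x] by (simp add: dquot_qt qt_eq)
qed

end

section \<open>Uniqueness\<close>

context lie_leibniz_data
begin

lemma is_dfamily_Tdeg: "is_dfamily sV act circ Theta d \<Longrightarrow> 1 \<le> i \<Longrightarrow> X \<in> Tdeg R (Suc i) \<Longrightarrow> d i X \<in> Tdeg R i"
  and is_dfamily_tadd: "is_dfamily sV act circ Theta d \<Longrightarrow> 1 \<le> i \<Longrightarrow> X \<in> Tdeg R (Suc i) \<Longrightarrow>
    Y \<in> Tdeg R (Suc i) \<Longrightarrow> d i (tadd R X Y) = tadd R (d i X) (d i Y)"
  and is_dfamily_tsc: "is_dfamily sV act circ Theta d \<Longrightarrow> 1 \<le> i \<Longrightarrow> X \<in> Tdeg R (Suc i) \<Longrightarrow>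
    d i (tsc R c X) = tsc R c (d i X)"
  and is_dfamily_iota_iota: "is_dfamily sV act circ Theta d \<Longrightarrow>
    d 1 (tbr R (iota R x) (iota R y)) = iota R (sV 2 (anticomm sV circ x y))"
  and is_dfamily_iota_tbr: "is_dfamily sV act circ Theta d \<Longrightarrow> 2 \<le> i \<Longrightarrow> X \<in> Tdeg R i \<Longrightarrow>
    d i (tbr R (iota R x) X) = tsub R (tact act R (Theta x) X) (tbr R (iota R x) (d (i - 1) X))"
  and is_dfamily_tbr: "is_dfamily sV act circ Theta d \<Longrightarrow> 2 \<le> i \<Longrightarrow> 2 \<le> j \<Longrightarrow>
    X \<in> Tdeg R i \<Longrightarrow> Y \<in> Tdeg R j \<Longrightarrow>
    d (i + j - 1) (tbr R X Y) = tadd R (tbr R (d (i - 1) X) Y) (tsc R ((-1) ^ i) (tbr R X (d (j - 1) Y)))"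
  by (simp_all add: is_dfamily_def Let_def)

lemma is_dfamily_qt_zero:
  assumes d: "is_dfamily sV act circ Theta d" and i: "1 \<le> i"
  shows "d i (qt R 0) = qt R 0"
proof -
  have X: "qt R 0 \<in> Tdeg R (Suc i)" by (rule Tdeg_I) simp
  obtain z where z: "z \<in> Wdeg i" "d i (qt R 0) = qt R z"
    using is_dfamily_Tdeg[OF d i X] by (rule Tdeg_E)
  have "d i (qt R 0) = d i (tsc R 0 (qt R 0))" by (simp add: tsc_qt)
  also have "\<dots> = tsc R 0 (d i (qt R 0))" by (rule is_dfamily_tsc[OF d i X])
  finally show ?thesis using Wdeg_Wc[OF z(1)] z(2) by (simp add: tsc_qt)
qed

lemma tbr_iota_swap:
  assumes s: "nleaves s = i"
  shows "qt R (ind (Node s (Leaf b))) = tsc R (- ((-1) ^ i)) (tbr R (iota R b) (qt R (ind s)))"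
proof -
  have "ind (Node s (Leaf b)) + sW ((-1) ^ (i * 1)) (ind (Node (Leaf b) s)) \<in> R0 sV"
    using R0_antisym_Wdeg[OF ind_Wdeg[OF s] ind_Wdeg, of "Leaf b" 1 sV] by simp
  then have "qt R (ind (Node s (Leaf b))) = qt R (sW (- ((-1) ^ i)) (ind (Node (Leaf b) s)))"
    by (intro qt_eq Trel.rel) (simp add: sW_neg)
  then show ?thesis by (simp add: iota_qt tbr_qt tsc_qt)
qed

lemma ltree_Suc_cases:
  assumes t: "nleaves t = Suc i" and i: "1 \<le> i"
  obtains (leaf_leaf) a b where "t = Node (Leaf a) (Leaf b)" "i = 1"
  | (leaf_tree) a r where "t = Node (Leaf a) r" "nleaves r = i" "2 \<le> i"
  | (tree_leaf) s b where "t = Node s (Leaf b)" "nleaves s = i" "2 \<le> i"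
  | (tree_tree) s r where "t = Node s r" "2 \<le> nleaves s" "2 \<le> nleaves r" "nleaves s + nleaves r = Suc i"
proof -
  obtain s r where tsr: "t = Node s r" using t i by (cases t) auto
  show thesis
  proof (cases s; cases r)
    fix a b assume "s = Leaf a" "r = Leaf b"
    then show thesis using leaf_leaf t tsr by simp
  next
    fix a r1 r2 assume "s = Leaf a" "r = Node r1 r2"
    then show thesis using leaf_tree[of a r] t tsr nleaves_Node_ge2[of r1 r2] by simp
  next
    fix s1 s2 b assume "s = Node s1 s2" "r = Leaf b"
    then show thesis using tree_leaf[of s b] t tsr nleaves_Node_ge2[of s1 s2] by simp
  next
    fix s1 s2 r1 r2 assume "s = Node s1 s2" "r = Node r1 r2"
    then show thesis using tree_tree[of s r] t tsr nleaves_Node_ge2[of s1 s2] nleaves_Node_ge2[of r1 r2] by simp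
  qed
qed

lemma is_dfamily_eq_tree:
  assumes d1: "is_dfamily sV act circ Theta d1" and d2: "is_dfamily sV act circ Theta d2"
    and i: "1 \<le> i" and t: "nleaves t = Suc i"
    and lower: "\<And>m X. 1 \<le> m \<Longrightarrow> m < i \<Longrightarrow> X \<in> Tdeg R (Suc m) \<Longrightarrow> d1 m X = d2 m X"
  shows "d1 i (qt R (ind t)) = d2 i (qt R (ind t))"
proof -
  have lower': "d1 (n - 1) (qt R (ind s)) = d2 (n - 1) (qt R (ind s))"
    if "nleaves s = n" "2 \<le> n" "n \<le> i" for s n
    using that by (intro lower Tdeg_I ind_Wdeg) auto
  have leaf: "d1 i (tbr R (iota R b) (qt R (ind s))) = d2 i (tbr R (iota R b) (qt R (ind s)))"
    if "nleaves s = i" "2 \<le> i" for s b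
    using that is_dfamily_iota_tbr[OF d1, of i] is_dfamily_iota_tbr[OF d2, of i] lower'[of s i]
    by (simp add: Tdeg_I ind_Wdeg)
  from t i show ?thesis
  proof (cases rule: ltree_Suc_cases)
    case (leaf_leaf a b)
    then show ?thesis using is_dfamily_iota_iota[OF d1] is_dfamily_iota_iota[OF d2]
      by (simp add: iota_qt tbr_qt)
  next
    case (leaf_tree a r)
    then show ?thesis using leaf[of r a] by (simp add: iota_qt tbr_qt)
  next
    case (tree_leaf s b)
    have Y: "tbr R (iota R b) (qt R (ind s)) \<in> Tdeg R (Suc i)"
      using tree_leaf by (simp add: iota_qt tbr_qt Tdeg_I ind_Wdeg)
    show ?thesis
      unfolding tree_leaf(1) tbr_iota_swap[OF tree_leaf(2)] is_dfamily_tsc[OF d1 i Y] is_dfamily_tsc[OF d2 i Y]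
      using leaf[OF tree_leaf(2,3)] by simp
  next
    case (tree_tree s r)
    have X: "qt R (ind s) \<in> Tdeg R (nleaves s)" and Y: "qt R (ind r) \<in> Tdeg R (nleaves r)"
      by (intro Tdeg_I ind_Wdeg refl)+
    have "i = nleaves s + nleaves r - 1" using tree_tree by simp
    then show ?thesis
      using is_dfamily_tbr[OF d1 tree_tree(2,3) X Y] is_dfamily_tbr[OF d2 tree_tree(2,3) X Y]
        lower'[of s "nleaves s"] lower'[of r "nleaves r"] tree_tree
      by (simp add: tbr_qt)
  qed
qed

lemma is_dfamily_unique:
  assumes d1: "is_dfamily sV act circ Theta d1" and d2: "is_dfamily sV act circ Theta d2"
  shows "1 \<le> i \<Longrightarrow> X \<in> Tdeg R (Suc i) \<Longrightarrow> d1 i X = d2 i X"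
proof (induction i arbitrary: X rule: less_induct)
  case (less i)
  obtain w where w: "w \<in> Wdeg (Suc i)" and X: "X = qt R w" using less.prems(2) by (rule Tdeg_E)
  show ?case unfolding X using w
  proof (induction rule: Wdeg_induct)
    case zero
    then show ?case using is_dfamily_qt_zero[OF d1 less.prems(1)] is_dfamily_qt_zero[OF d2 less.prems(1)] by simp
  next
    case (step c t g)
    have T: "qt R (ind t) \<in> Tdeg R (Suc i)" and G: "qt R g \<in> Tdeg R (Suc i)"
      using step(1,2) by (intro Tdeg_I ind_Wdeg; simp)+
    have "qt R (sW c (ind t) + g) = tadd R (tsc R c (qt R (ind t))) (qt R g)"
      using Wdeg_Wc[OF step(2)] by (simp add: tsc_qt tadd_qt)
    moreover have "tsc R c (qt R (ind t)) \<in> Tdeg R (Suc i)"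
      using step(1) by (simp add: tsc_qt Tdeg_I ind_Wdeg)
    moreover have "d1 i (qt R (ind t)) = d2 i (qt R (ind t))"
      using is_dfamily_eq_tree[OF d1 d2 less.prems(1) step(1)] less.IH by blast
    ultimately show ?case
      using is_dfamily_tadd[OF d1 less.prems(1) _ G] is_dfamily_tadd[OF d2 less.prems(1) _ G]
        is_dfamily_tsc[OF d1 less.prems(1) T] is_dfamily_tsc[OF d2 less.prems(1) T] step(3)
      by simp
  qed
qed

end

theorem mainTheorem7:
  fixes sG :: "'k::field_char_0 \<Rightarrow> 'g::ab_group_add \<Rightarrow> 'g"
    and brg :: "'g \<Rightarrow> 'g \<Rightarrow> 'g"
    and sV :: "'k \<Rightarrow> 'v::ab_group_add \<Rightarrow> 'v"
    and act :: "'g \<Rightarrow> 'v \<Rightarrow> 'v"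
    and circ :: "'v \<Rightarrow> 'v \<Rightarrow> 'v"
    and Theta :: "'v \<Rightarrow> 'g"
  assumes "lie_leibniz_triple sG brg sV act circ Theta"
  shows "\<exists>d. is_dfamily sV act circ Theta d
           \<and> (\<forall>d'. is_dfamily sV act circ Theta d' \<longrightarrow>
                (\<forall>i\<ge>1. \<forall>X\<in>Tdeg (Trel sV act circ) (Suc i). d' i X = d i X))
           \<and> (\<forall>i\<ge>1. \<forall>X\<in>Tdeg (Trel sV act circ) (i + 2).
                d i (d (Suc i) X) = tzero (Trel sV act circ))"
proof -
  interpret lie_leibniz_setting sV act circ Theta sG brg
    using assms by unfold_locales
  show ?thesis
    using dquot_is_dfamily is_dfamily_unique[OF _ dquot_is_dfamily] dquot_dquot by blast
qed

end
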